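(* Let $q>2$ be a prime power, $m\ge1$, $n=q^m-1=r_1r_2$ with $r_1,r_2>1$, $\gcd(r_1,r_2)=1$, $r_1=q^a-1$ for some natural number $a$, and $m=ab$. Fix a generator $\alpha$ of $\mathbb{F}_{q^m}^*$ and a group isomorphism $T:\mathbb{Z}_n\to\mathbb{Z}_{r_1}\times\mathbb{Z}_{r_2}$. Let $\Gamma=\gamma_1\cup\gamma_2\cup\gamma_3\subseteq\mathbb{Z}_{r_1}\times\mathbb{Z}_{r_2}$ where $\gamma_1=\{(i_1,i_2)\mid 0\le i_1<\frac{a(a-1)}{2},\ 0\le i_2<b^2\}$, $\gamma_2=\{(i_1,i_2)\mid \frac{a(a-1)}{2}\le i_1<\frac{a(a+1)}{2},\ 0\le i_2<\frac{b(b+1)}{2}\}$, $\gamma_3=\{(i_1,i_2)\mid \frac{a(a+1)}{2}\le i_1<\frac{a(a+3)}{2},\ 0\le i_2<b\}$. Then $\{0\}\cup\{\alpha^i\mid i\in T^{-1}(\Gamma)\}\subseteq\mathbb{F}_{q^m}$ is an information set for $R_q(2,m)$, and $\{\alpha^i\mid i\in\mathbb{Z}_n,\ i\notin T^{-1}(\Gamma)\}$ is an information set for $R_q(m(q-1)-3,m)$.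
   Context: $\mathbb{F}=\mathbb{F}_q$; elements of $\mathbb{Z}_r$ are identified with integers $0,\dots,r-1$. $\mathrm{wt}_q(k)$ is the sum of the base-$q$ digits of $k$. Let $G$ be the additive group of $\mathbb{F}_{q^m}$; words of length $q^m$ are vectors in $\mathbb{F}^G$, written $bX^0+\sum_{i=0}^{n-1}a_iX^{\alpha^i}$ (coordinates $0$ and $\alpha^i$). For $0<\rho\le m(q-1)$, the generalized Reed–Muller code $R_q(\rho,m)$ consists of the words with $b\cdot0^s+\sum_i a_i\alpha^{is}=0$ for all $0\le s<q^m-1$ with $\mathrm{wt}_q(s)<m(q-1)-\rho$ ($0^0=1$). For a linear code of dimension $k$ on coordinate set $P$, an information set is $I\subseteq P$ with $|I|=k$ such that the projection of the code onto $I$ is all of $\mathbb{F}^k$. *)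

theory Defs
  imports "HOL-Computational_Algebra.Primes" "HOL-Library.FuncSet"
begin

definition prime_power :: "nat \<Rightarrow> bool" where
  "prime_power q \<longleftrightarrow> (\<exists>p k. prime p \<and> k > 0 \<and> q = p ^ k)"

text \<open>Sum of the base-q digits of s (for q at least 2; the digit of index i is
  (s div q^i) mod q, and all digits of index > s vanish).\<close>
definition wt :: "nat \<Rightarrow> nat \<Rightarrow> nat" where
  "wt q s = (\<Sum>i\<le>s. (s div q ^ i) mod q)"

definition subfield_q :: "nat \<Rightarrow> 'e::field set" where
  "subfield_q q = {x. x ^ q = x}"

text \<open>Generalized Reed--Muller code R_q(rho,m) over F_q, with coordinates indexed
  by the elements of the field 'e of order q^m (the additive group G).
  A word is a function c : 'e \<Rightarrow> F_q; c 0 = b and c (alpha^i) = a_i. The check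
  b 0^s + \<Sum> a_i alpha^(is) equals \<Sum>x. c x * x^s (with 0^0 = 1).\<close>
definition GRM :: "nat \<Rightarrow> nat \<Rightarrow> nat \<Rightarrow> ('e::{finite,field} \<Rightarrow> 'e) set" where
  "GRM q \<rho> m = {c. (\<forall>x. c x \<in> subfield_q q) \<and>
      (\<forall>s. s < q ^ m - 1 \<and> wt q s < m * (q - 1) - \<rho> \<longrightarrow>
           (\<Sum>x\<in>UNIV. c x * x ^ s) = 0)}"

definition code_dim :: "'a set \<Rightarrow> ('c \<Rightarrow> 'a) set \<Rightarrow> nat" where
  "code_dim F C = (THE k. card C = card F ^ k)"

definition info_set :: "'a set \<Rightarrow> ('c \<Rightarrow> 'a) set \<Rightarrow> 'c set \<Rightarrow> bool" where
  "info_set F C I \<longleftrightarrow> finite I \<and> card I = code_dim F C \<and>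
      (\<lambda>c. restrict c I) ` C = (I \<rightarrow>\<^sub>E F)"

end

theory Submission
  imports Defs "HOL-Computational_Algebra.Polynomial"
begin

(* Both codes are described through the exponents W = {0, q^j, q^j + q^k} of base-q weight at
   most 2.  By the discrete Fourier expansion every word c of R_q(2,m) is a polynomial function,
   and the parity checks kill its coefficients outside W because wt t + wt (n - t) = m (q - 1).
   Conversely a polynomial supported on W lies in R_q(2,m) once its values lie in F_q, and by
   Frobenius this already follows from its values on a unisolvent set (one on which only the zero
   polynomial vanishes).  Hence a unisolvent set I with |I| <= |W| is an information set of
   R_q(2,m).  The code R_q(m(q-1)-3,m) is orthogonal to all these polynomials, so a word of it is
   determined by its values outside I, and any such values extend to a codeword through the
   Lagrange basis of I: the complement of I is an information set of the second code.

   For I = {0} u {alpha^i. T i in Gamma} write alpha^i = beta^i1 gamma^i2 with beta, gamma of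
   orders r1, r2.  As r1 = q^a - 1, the value beta^t only depends on the residues mod a of the
   digit positions of t, which splits W into fibres of equal beta^t.  The coefficients vanish in
   three rounds (t = q^j; t = q^j + q^k with j = k mod a; the rest): a Vandermonde argument in beta
   over the first coordinate of a rectangle inside Gamma isolates a fibre, and one in gamma over
   the second coordinate kills it, since gamma^t separates the exponents of a fibre by the Chinese
   remainder theorem.  The three rectangles of Gamma are exactly as wide as the number of values
   of beta^t and as high as the largest fibre of the respective round, and |Gamma| < |W|. *)

section \<open>Digit sums in base q\<close>

lemma wt_altdef:
  assumes q: "q \<ge> 2" and "s \<le> N"
  shows "wt q s = (\<Sum>i\<le>N. (s div q ^ i) mod q)"
  unfolding wt_def
proof (rule sum.mono_neutral_left)
  show "\<forall>i\<in>{..N} - {..s}. s div q ^ i mod q = 0"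
  proof
    fix i assume "i \<in> {..N} - {..s}"
    hence "s < i" by simp
    also have "i < 2 ^ i" by (rule less_exp)
    also have "\<dots> \<le> q ^ i" using q by (intro power_mono) auto
    finally show "s div q ^ i mod q = 0" by simp
  qed
qed (use assms in auto)

lemma wt_div_mod:
  assumes q: "q \<ge> 2"
  shows "wt q s = s mod q + wt q (s div q)"
proof -
  have "wt q s = (\<Sum>i\<le>Suc s. (s div q ^ i) mod q)" using q by (intro wt_altdef) auto
  also have "\<dots> = s mod q + (\<Sum>i\<le>s. (s div q div q ^ i) mod q)"
    by (subst sum.atMost_Suc_shift) (simp add: div_mult2_eq)
  also have "(\<Sum>i\<le>s. (s div q div q ^ i) mod q) = wt q (s div q)"
    using q by (intro wt_altdef[symmetric]) (auto intro: div_le_dividend)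
  finally show ?thesis .
qed

lemma wt_0 [simp]: "wt q 0 = 0"
  by (simp add: wt_def)

lemma wt_digit: "q \<ge> 2 \<Longrightarrow> d < q \<Longrightarrow> wt q (d + q * s) = d + wt q s"
  by (subst wt_div_mod) auto

lemma wt_less_base: "q \<ge> 2 \<Longrightarrow> d < q \<Longrightarrow> wt q d = d"
  using wt_digit[of q d 0] by simp

lemma wt_base_mult: "q \<ge> 2 \<Longrightarrow> wt q (q * s) = wt q s"
  using wt_digit[of q 0 s] by simp

lemma wt_power: "q \<ge> 2 \<Longrightarrow> wt q (q ^ j) = 1"
  by (induction j) (simp_all add: wt_less_base wt_base_mult)

lemma wt_power_add_power:
  assumes q: "q > 2"
  shows "wt q (q ^ j + q ^ k) = 2"
proof (induction j arbitrary: k)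
  case 0
  show ?case
  proof (cases k)
    case (Suc k')
    have "wt q (1 + q * q ^ k') = 2" using q wt_digit[of q 1 "q ^ k'"] by (simp add: wt_power)
    thus ?thesis using Suc by simp
  qed (use q in \<open>simp add: wt_less_base\<close>)
next
  case (Suc j)
  show ?case
  proof (cases k)
    case 0
    have "wt q (1 + q * q ^ j) = 2" using q wt_digit[of q 1 "q ^ j"] by (simp add: wt_power)
    thus ?thesis using 0 by (simp add: add.commute)
  next
    case (Suc k')
    have "q ^ Suc j + q ^ k = q * (q ^ j + q ^ k')" by (simp add: Suc algebra_simps)
    thus ?thesis using Suc.IH q by (simp add: wt_base_mult)
  qed
qed

lemma wt_complement:
  assumes q: "q \<ge> 2"
  shows "t < q ^ m \<Longrightarrow> wt q (q ^ m - 1 - t) + wt q t = m * (q - 1)"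
proof (induction m arbitrary: t)
  case (Suc m)
  define d t' where "d = t mod q" and "t' = t div q"
  have t: "t = d + q * t'" and d: "d < q" using q by (simp_all add: d_def t'_def)
  have t': "t' < q ^ m"
    using Suc.prems q by (simp add: t'_def less_mult_imp_div_less mult.commute)
  have split: "q ^ Suc m - 1 - t = (q - 1 - d) + q * (q ^ m - 1 - t')"
  proof -
    have "t' + 1 \<le> q ^ m" using t' by simp
    hence "q * (q ^ m - 1 - t') = q * q ^ m - q - q * t'" and "q + q * t' \<le> q * q ^ m"
      using mult_le_mono2[of "t' + 1" "q ^ m" q] by (simp_all add: diff_mult_distrib2)
    thus ?thesis using t d by (simp add: algebra_simps)
  qed
  have "wt q (q ^ Suc m - 1 - t) = (q - 1 - d) + wt q (q ^ m - 1 - t')"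
    unfolding split using q d by (intro wt_digit) auto
  moreover have "wt q t = d + wt q t'"
    unfolding t using q d by (intro wt_digit)
  ultimately show ?case using Suc.IH[OF t'] d by simp
qed simp

lemma wt_le_1_cases:
  assumes q: "q \<ge> 2"
  shows "t < q ^ m \<Longrightarrow> wt q t \<le> 1 \<Longrightarrow> t = 0 \<or> (\<exists>j<m. t = q ^ j)"
proof (induction m arbitrary: t)
  case (Suc m)
  define d t' where "d = t mod q" and "t' = t div q"
  have t: "t = d + q * t'" by (simp add: d_def t'_def)
  have t': "t' < q ^ m"
    using Suc.prems q by (simp add: t'_def less_mult_imp_div_less mult.commute)
  have wt: "wt q t = d + wt q t'" unfolding t using q by (intro wt_digit) (auto simp: d_def)
  show ?case
  proof (cases "d = 0")
    case True
    with Suc.IH[OF t'] wt Suc.prems have "t' = 0 \<or> (\<exists>j<m. t' = q ^ j)" by auto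
    then show ?thesis
    proof (elim disjE exE conjE)
      fix j assume "j < m" "t' = q ^ j"
      thus ?thesis using t True by (intro disjI2 exI[of _ "Suc j"]) auto
    qed (use t True in auto)
  next
    case False
    hence "d = 1" "t' = 0" using wt Suc.prems Suc.IH[OF t'] q by (auto simp: wt_power)
    thus ?thesis using t by (auto intro!: exI[of _ 0])
  qed
qed simp

lemma wt_le_2_cases:
  assumes q: "q > 2"
  shows "t < q ^ m \<Longrightarrow> wt q t \<le> 2 \<Longrightarrow>
    t = 0 \<or> (\<exists>j<m. t = q ^ j) \<or> (\<exists>j k. j \<le> k \<and> k < m \<and> t = q ^ j + q ^ k)"
proof (induction m arbitrary: t)
  case (Suc m)
  define d t' where "d = t mod q" and "t' = t div q"
  have t: "t = d + q * t'" by (simp add: d_def t'_def)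
  have t': "t' < q ^ m"
    using Suc.prems q by (simp add: t'_def less_mult_imp_div_less mult.commute)
  have wt: "wt q t = d + wt q t'" unfolding t using q by (intro wt_digit) (auto simp: d_def)
  consider "d = 0" | "d = 1" | "d = 2" using wt Suc.prems by linarith
  then show ?case
  proof cases
    case 1
    with Suc.IH[OF t'] wt Suc.prems have
      "t' = 0 \<or> (\<exists>j<m. t' = q ^ j) \<or> (\<exists>j k. j \<le> k \<and> k < m \<and> t' = q ^ j + q ^ k)" by auto
    then show ?thesis
    proof (elim disjE exE conjE)
      fix j k assume "j \<le> k" "k < m" "t' = q ^ j + q ^ k"
      thus ?thesis using t 1
        by (intro disjI2 exI[of _ "Suc j"] exI[of _ "Suc k"]) (auto simp: algebra_simps)
    next
      fix j assume "j < m" "t' = q ^ j"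
      thus ?thesis using t 1 by (intro disjI2 disjI1 exI[of _ "Suc j"]) auto
    qed (use t 1 in auto)
  next
    case 2
    with wt_le_1_cases[OF _ t'] wt Suc.prems q have "t' = 0 \<or> (\<exists>j<m. t' = q ^ j)" by auto
    then show ?thesis
    proof (elim disjE exE conjE)
      fix j assume "j < m" "t' = q ^ j"
      thus ?thesis using t 2 by (intro disjI2 exI[of _ 0] exI[of _ "Suc j"]) auto
    qed (use t 2 in \<open>auto intro!: exI[of _ 0]\<close>)
  next
    case 3
    hence "t' = 0" using wt Suc.prems wt_le_1_cases[OF _ t'] q by (auto simp: wt_power)
    thus ?thesis using t 3 by (intro disjI2 exI[of _ 0] exI[of _ 0]) auto
  qed
qed simp

lemma power_add_power_mod_base:
  fixes q :: nat
  assumes q: "q > 2"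
  shows "(q ^ v + q ^ w) mod q = 0 \<longleftrightarrow> v > 0 \<and> w > 0"
proof -
  have unit_digit: "(1 + q * x) mod q = 1" for x
    using q by (simp only: mod_mult_self2) simp
  show ?thesis
    using q unit_digit by (cases v; cases w) (simp_all add: add.commute[of _ 1])
qed

lemma power_add_power_inj:
  fixes q :: nat
  assumes q: "q > 2"
  shows "v \<le> w \<Longrightarrow> v' \<le> w' \<Longrightarrow> q ^ v + q ^ w = q ^ v' + q ^ w' \<Longrightarrow> v = v' \<and> w = w'"
proof (induction v arbitrary: w v' w')
  case 0
  have "\<not> 0 < v'"
  proof
    assume "0 < v'"
    hence "(q ^ v' + q ^ w') mod q = 0" using "0.prems"(2) power_add_power_mod_base[OF q] by simp
    thus False using "0.prems"(3) power_add_power_mod_base[OF q, of 0 w] by simp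
  qed
  thus ?case using 0 q by simp
next
  case (Suc v)
  have "(q ^ Suc v + q ^ w) mod q = 0"
    using Suc.prems(1) power_add_power_mod_base[OF q, of "Suc v" w] by simp
  hence "(q ^ v' + q ^ w') mod q = 0" unfolding Suc.prems(3) .
  hence "v' > 0" "w > 0" "w' > 0" using Suc.prems power_add_power_mod_base[OF q] by auto
  then obtain v'' w0 w'' where eqs: "v' = Suc v''" "w = Suc w0" "w' = Suc w''"
    by (metis gr0_implies_Suc)
  have "q * (q ^ v + q ^ w0) = q * (q ^ v'' + q ^ w'')"
    using Suc.prems eqs by (simp add: algebra_simps)
  hence "q ^ v + q ^ w0 = q ^ v'' + q ^ w''" using q by simp
  from Suc.IH[OF _ _ this] Suc.prems eqs show ?case by simp
qed

lemma power_neq_power_add_power: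
  fixes q :: nat
  assumes "q > 2"
  shows "q ^ u \<noteq> q ^ v + q ^ w"
  using wt_power[of q u] wt_power_add_power[OF assms, of v w] assms by auto

lemma power_mod_power_minus_1:
  fixes q :: nat
  assumes "q > 0"
  shows "q ^ j mod (q ^ a - 1) = q ^ (j mod a) mod (q ^ a - 1)"
proof -
  have "q ^ a mod (q ^ a - 1) = ((q ^ a - 1) + 1) mod (q ^ a - 1)" using assms by simp
  also have "\<dots> = 1 mod (q ^ a - 1)" by (rule mod_add_self1)
  finally have "(q ^ a) ^ (j div a) mod (q ^ a - 1) = 1 mod (q ^ a - 1)"
    by (metis power_mod power_one)
  moreover have "q ^ j = (q ^ a) ^ (j div a) * q ^ (j mod a)"
    by (simp flip: power_mult power_add)
  ultimately show ?thesis by (metis mod_mult_left_eq mult_1)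
qed

lemma nat_geometric_sum:
  fixes x :: nat
  assumes "x \<ge> 1"
  shows "(x - 1) * (\<Sum>l<b. x ^ l) = x ^ b - 1"
proof -
  have "int ((x - 1) * (\<Sum>l<b. x ^ l)) = int (x ^ b - 1)"
    using assms power_diff_1_eq[of "int x" b] by (simp add: of_nat_diff)
  thus ?thesis by (rule of_nat_eq_iff[THEN iffD1])
qed

section \<open>Vandermonde systems\<close>

lemma finite_pairs_le: "finite {(j, k). j \<le> k \<and> k < (N::nat)}"
  by (rule finite_subset[of _ "{..N} \<times> {..N}"]) auto

lemma finite_pairs_less: "finite {(j, k). j < k \<and> k < (N::nat)}"
  by (rule finite_subset[of _ "{..N} \<times> {..N}"]) auto

lemma card_pairs_le: "card {(j, k). j \<le> k \<and> k < (N::nat)} = N * (N + 1) div 2"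
proof -
  have "2 * card {(j, k). j \<le> k \<and> k < N} = N * (N + 1)"
  proof (induction N)
    case (Suc N)
    have "{(j, k). j \<le> k \<and> k < Suc N} = {(j, k). j \<le> k \<and> k < N} \<union> (\<lambda>j. (j, N)) ` {..N}"
      by auto
    moreover have "card ((\<lambda>j. (j, N)) ` {..N}) = Suc N" by (subst card_image) (auto intro: inj_onI)
    moreover have "{(j, k). j \<le> k \<and> k < N} \<inter> (\<lambda>j. (j, N)) ` {..N} = {}" by auto
    ultimately show ?case
      using Suc.IH finite_pairs_le[of N] by (simp add: card_Un_disjoint algebra_simps)
  qed simp
  thus ?thesis by simp
qed

lemma card_pairs_less: "card {(j, k). j < k \<and> k < (N::nat)} = N * (N - 1) div 2"
proof -
  have "2 * card {(j, k). j < k \<and> k < N} = N * (N - 1)"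
  proof (induction N)
    case (Suc N)
    have "{(j, k). j < k \<and> k < Suc N} = {(j, k). j < k \<and> k < N} \<union> (\<lambda>j. (j, N)) ` {..<N}"
      by auto
    moreover have "card ((\<lambda>j. (j, N)) ` {..<N}) = N" by (subst card_image) (auto intro: inj_onI)
    moreover have "{(j, k). j < k \<and> k < N} \<inter> (\<lambda>j. (j, N)) ` {..<N} = {}" by auto
    ultimately have "2 * card {(j, k). j < k \<and> k < Suc N} = N * (N - 1) + 2 * N"
      using Suc.IH finite_pairs_less[of N] by (simp add: card_Un_disjoint algebra_simps)
    also have "\<dots> = Suc N * (Suc N - 1)" by (cases N) (auto simp: algebra_simps)
    finally show ?case .
  qed simp
  thus ?thesis by simp
qed

lemma vandermonde_vanishing:
  fixes w g :: "'b \<Rightarrow> 'a::field"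
  assumes fin: "finite S" and inj: "inj_on w S" and card: "card S \<le> N"
    and van: "\<forall>i<N. (\<Sum>s\<in>S. g s * w s ^ i) = 0" and s0: "s0 \<in> S"
  shows "g s0 = 0"
proof -
  define P where "P = (\<Prod>s\<in>S - {s0}. [:- w s, 1:])"
  have poly_P: "poly P z = (\<Prod>s\<in>S - {s0}. z - w s)" for z
    unfolding P_def by (simp add: poly_prod)
  have "card (S - {s0}) < N" using card s0 fin by (metis card_Diff1_less order_less_le_trans)
  hence "degree P < N" unfolding P_def by (subst degree_prod_sum_eq) auto
  hence poly_P_N: "poly P z = (\<Sum>i<N. coeff P i * z ^ i)" for z
    unfolding poly_altdef by (intro sum.mono_neutral_left) (auto simp: coeff_eq_0)
  have "0 = (\<Sum>i<N. coeff P i * (\<Sum>s\<in>S. g s * w s ^ i))" using van by simp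
  also have "\<dots> = (\<Sum>s\<in>S. g s * poly P (w s))"
    by (simp add: poly_P_N sum_distrib_left sum_distrib_right algebra_simps sum.swap[of _ "{..<N}"])
  also have "\<dots> = g s0 * poly P (w s0)"
  proof -
    have "poly P (w s) = 0" if "s \<in> S - {s0}" for s
      unfolding poly_P using that fin by (intro prod_zero) auto
    thus ?thesis using fin s0 by (subst sum.remove) (auto intro!: sum.neutral)
  qed
  finally have "g s0 * poly P (w s0) = 0" ..
  moreover have "poly P (w s0) \<noteq> 0"
    using inj s0 fin by (auto simp: poly_P prod_zero_iff dest: inj_onD)
  ultimately show ?thesis by simp
qed

lemma vandermonde_vanishing_fibre:
  fixes lab :: "'b \<Rightarrow> 'a::field"
  assumes fin: "finite S" and card: "card (lab ` S) \<le> N"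
    and van: "\<forall>i<N. (\<Sum>s\<in>S. g s * lab s ^ i) = 0" and y: "y \<in> lab ` S"
  shows "(\<Sum>s\<in>{s\<in>S. lab s = y}. g s) = 0"
proof -
  define G where "G y = (\<Sum>s\<in>{s\<in>S. lab s = y}. g s)" for y
  have "\<forall>i<N. (\<Sum>y\<in>lab ` S. G y * id y ^ i) = 0"
  proof (intro allI impI)
    fix i assume "i < N"
    have "(\<Sum>s\<in>S. g s * lab s ^ i) = (\<Sum>y\<in>lab ` S. \<Sum>s\<in>{s\<in>S. lab s = y}. g s * lab s ^ i)"
      by (rule sum.image_gen[OF fin])
    also have "\<dots> = (\<Sum>y\<in>lab ` S. G y * id y ^ i)"
      unfolding G_def by (intro sum.cong refl) (auto simp: sum_distrib_right)
    finally show "(\<Sum>y\<in>lab ` S. G y * id y ^ i) = 0" using van \<open>i < N\<close> by simp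
  qed
  from vandermonde_vanishing[OF _ _ card this y] fin show ?thesis unfolding G_def by simp
qed

lemma of_nat_card_UNIV: "of_nat (card (UNIV :: 'a::{finite,ring_1} set)) = (0 :: 'a)"
proof -
  have "(\<Sum>y\<in>UNIV. y + (1 :: 'a)) = (\<Sum>y\<in>UNIV. y)"
    using sum.reindex_bij_betw[OF bij_plus_right, of "\<lambda>y. y" 1] by simp
  thus ?thesis by (simp add: sum.distrib)
qed

lemma info_setI:
  assumes fin: "finite I" and F: "card F \<ge> 2"
    and bij: "bij_betw (\<lambda>c. restrict c I) C (I \<rightarrow>\<^sub>E F)"
  shows "info_set F C I"
proof -
  have "card C = card (I \<rightarrow>\<^sub>E F)" using bij by (rule bij_betw_same_card)
  also have "\<dots> = card F ^ card I" using fin by (simp add: card_PiE)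
  finally have "code_dim F C = card I"
    unfolding code_dim_def using F by (intro the_equality) auto
  thus ?thesis unfolding info_set_def using fin bij by (simp add: bij_betw_def)
qed

section \<open>Finite fields with a primitive element\<close>

text \<open>The assumption \<open>\<alpha> \<noteq> 0\<close> is not implied by the others when \<open>n = 1\<close>.\<close>

locale primitive_element =
  fixes \<alpha> :: "'e::{finite,field}" and n :: nat
  assumes card_UNIV: "card (UNIV :: 'e set) = Suc n"
    and primitive_nonzero: "\<alpha> \<noteq> 0"
    and powers_primitive: "(\<lambda>i. \<alpha> ^ i) ` {..<n} = UNIV - {0}"
begin

lemma card_nonzero: "card (UNIV - {0 :: 'e}) = n"
  using card_UNIV by (simp add: card_Diff_subset)

lemma n_pos: "n > 0"
proof -
  have "card {0 :: 'e, 1} \<le> card (UNIV :: 'e set)" by (rule card_mono) auto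
  thus ?thesis using card_UNIV by simp
qed

lemma inj_on_powers: "inj_on (\<lambda>i. \<alpha> ^ i) {..<n}"
  using powers_primitive card_nonzero by (intro eq_card_imp_inj_on) auto

lemma nonzero_eq_power: "x \<noteq> 0 \<Longrightarrow> \<exists>i<n. x = \<alpha> ^ i"
proof -
  assume "x \<noteq> 0"
  hence "x \<in> (\<lambda>i. \<alpha> ^ i) ` {..<n}" using powers_primitive by simp
  thus ?thesis by auto
qed

lemma nonzero_power_n:
  assumes x: "(x :: 'e) \<noteq> 0"
  shows "x ^ n = 1"
proof -
  have "(\<Prod>y\<in>UNIV - {0}. x * y) = (\<Prod>y\<in>UNIV - {0}. y)"
    using x by (intro prod.reindex_bij_witness[of _ "\<lambda>y. y / x" "\<lambda>y. x * y"]) auto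
  moreover have "(\<Prod>y\<in>UNIV - {0::'e}. y) \<noteq> 0" by simp
  ultimately show ?thesis by (simp add: prod.distrib card_nonzero)
qed

lemma nonzero_power_mod:
  assumes "(x :: 'e) \<noteq> 0"
  shows "x ^ i = x ^ (i mod n)"
proof -
  have "x ^ i = (x ^ n) ^ (i div n) * x ^ (i mod n)"
    by (simp flip: power_mult power_add)
  thus ?thesis using assms by (simp add: nonzero_power_n)
qed

lemma power_eq_power_iff: "\<alpha> ^ i = \<alpha> ^ j \<longleftrightarrow> i mod n = j mod n"
proof -
  have "\<alpha> ^ i = \<alpha> ^ j \<longleftrightarrow> \<alpha> ^ (i mod n) = \<alpha> ^ (j mod n)"
    by (simp flip: nonzero_power_mod[OF primitive_nonzero])
  also have "\<dots> \<longleftrightarrow> i mod n = j mod n"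
    using n_pos by (intro inj_on_eq_iff[OF inj_on_powers]) auto
  finally show ?thesis .
qed

lemma of_nat_n: "(of_nat n :: 'e) = -1"
  using of_nat_card_UNIV[where 'a='e] card_UNIV by (simp add: eq_neg_iff_add_eq_0 add.commute)

lemma sum_powers: "(\<Sum>x\<in>UNIV. (x :: 'e) ^ u) = (if 0 < u \<and> n dvd u then -1 else 0)"
proof -
  have "UNIV = insert 0 ((\<lambda>i. \<alpha> ^ i) ` {..<n})" using powers_primitive by auto
  hence "(\<Sum>x\<in>UNIV. x ^ u) = 0 ^ u + (\<Sum>x\<in>(\<lambda>i. \<alpha> ^ i) ` {..<n}. x ^ u)"
    using primitive_nonzero by (metis finite imageE power_not_zero sum.insert)
  moreover have "(\<Sum>x\<in>(\<lambda>i. \<alpha> ^ i) ` {..<n}. x ^ u) = (\<Sum>i<n. (\<alpha> ^ u) ^ i)"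
    by (simp add: sum.reindex[OF inj_on_powers] mult.commute flip: power_mult)
  ultimately have "(\<Sum>x\<in>UNIV. x ^ u) = 0 ^ u + (\<Sum>i<n. (\<alpha> ^ u) ^ i)"
    by simp
  moreover have "(\<alpha> ^ u) ^ n = 1" by (simp add: nonzero_power_n primitive_nonzero)
  moreover have "\<alpha> ^ u = 1 \<longleftrightarrow> n dvd u"
    using power_eq_power_iff[of u 0] by (simp add: dvd_eq_mod_eq_0)
  moreover have "\<not> n dvd u \<Longrightarrow> 0 < u" by (cases u) auto
  ultimately show ?thesis using of_nat_n by (auto simp: sum_gp_strict zero_power)
qed

lemma sum_power_ratio:
  assumes x: "x \<noteq> 0" and y: "y \<noteq> 0"
  shows "(\<Sum>t\<in>{1..n}. (x :: 'e) ^ (n - t) * y ^ t) = (if x = y then -1 else 0)"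
proof -
  define z where "z = y / x"
  have "x ^ (n - t) * y ^ t = z ^ t" if "t \<le> n" for t
  proof -
    have "x ^ (n - t) * x ^ t = 1" using that x by (simp add: nonzero_power_n flip: power_add)
    thus ?thesis using x by (simp add: z_def field_simps power_divide)
  qed
  hence "(\<Sum>t\<in>{1..n}. x ^ (n - t) * y ^ t) = z * (\<Sum>i<n. z ^ i)"
    by (simp add: sum_distrib_left sum.atLeast1_atMost_eq)
  moreover have "z ^ n = 1" using x y by (simp add: z_def power_divide nonzero_power_n)
  moreover have "z = 1 \<longleftrightarrow> x = y" using x y by (auto simp: z_def)
  ultimately show ?thesis using of_nat_n by (auto simp: sum_gp_strict)
qed

lemma sum_power_diff_mult_power:
  "(\<Sum>t\<in>{1..n}. (x :: 'e) ^ (n - t) * y ^ t) =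
     (if y = 0 then 0 else if x = 0 then 1 else if x = y then -1 else 0)"
proof (cases "y = 0")
  case y: False
  show ?thesis
  proof (cases "x = 0")
    case True
    have "(\<Sum>t\<in>{1..n}. x ^ (n - t) * y ^ t) = y ^ n"
      using True n_pos by (subst sum.remove[of _ n]) (auto intro!: sum.neutral)
    thus ?thesis using True y by (simp add: nonzero_power_n)
  qed (use y sum_power_ratio in simp)
qed (auto intro!: sum.neutral)

text \<open>The coefficients of the polynomial of degree at most \<open>n\<close> that interpolates \<open>c\<close> on the
  whole field (an inverse discrete Fourier transform).\<close>

definition interp_coeff :: "('e \<Rightarrow> 'e) \<Rightarrow> nat \<Rightarrow> 'e" where
  "interp_coeff c t = (if t = 0 then c 0 else - (\<Sum>x\<in>UNIV. c x * x ^ (n - t)))"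

lemma interp_coeff_expansion: "c y = (\<Sum>t\<le>n. interp_coeff c t * y ^ t)"
proof -
  have "(\<Sum>t\<in>{1..n}. interp_coeff c t * y ^ t) =
      - (\<Sum>x\<in>UNIV. c x * (\<Sum>t\<in>{1..n}. x ^ (n - t) * y ^ t))"
    unfolding interp_coeff_def
    by (simp add: sum_distrib_left sum_distrib_right sum_negf mult.assoc) (rule sum.swap)
  also have "\<dots> = (if y = 0 then 0 else c y - c 0)"
  proof (cases "y = 0")
    case False
    have "(\<Sum>x\<in>UNIV. c x * (\<Sum>t\<in>{1..n}. x ^ (n - t) * y ^ t)) =
        (\<Sum>x\<in>UNIV. c x * (if x = 0 then 1 else if x = y then -1 else 0))"
      by (simp only: sum_power_diff_mult_power False if_False)
    also have "\<dots> = (\<Sum>x\<in>{0, y}. c x * (if x = 0 then 1 else -1))"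
      using False by (intro sum.mono_neutral_cong_right) auto
    finally show ?thesis using False by simp
  qed (simp only: sum_power_diff_mult_power, simp)
  finally show ?thesis
    by (simp add: atMost_atLeast0 sum.atLeast_Suc_atMost interp_coeff_def)
qed

end

locale prime_power_field = primitive_element \<alpha> n
  for \<alpha> :: "'e::{finite,field}" and n :: nat +
  fixes q m :: nat
  assumes prime_power: "prime_power q" and n_eq: "n = q ^ m - 1"
begin

lemma q_ge_2: "q \<ge> 2"
proof -
  obtain p k where pk: "prime p" "k > 0" "q = p ^ k"
    using prime_power unfolding prime_power_def by auto
  have "p ^ 1 \<le> p ^ k" using pk prime_gt_0_nat[OF pk(1)] by (intro power_increasing) auto
  thus ?thesis using prime_ge_2_nat[OF pk(1)] pk(3) by simp
qed

lemma power_m_eq: "q ^ m = Suc n"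
  using n_eq n_pos by simp

lemma m_pos: "m > 0"
  using power_m_eq n_pos by (cases m) auto

lemma prime_CHAR: "prime CHAR('e)"
  by (rule prime_CHAR_semidom[OF finite_imp_CHAR_pos]) simp

lemma q_eq_CHAR_power: "\<exists>k. q = CHAR('e) ^ k"
proof -
  obtain p k where pk: "prime p" "k > 0" "q = p ^ k"
    using prime_power unfolding prime_power_def by auto
  have "(of_nat (p ^ (k * m)) :: 'e) = 0"
    using of_nat_card_UNIV[where 'a='e] card_UNIV power_m_eq pk(3) by (simp add: power_mult)
  hence "CHAR('e) dvd p"
    using prime_CHAR by (simp add: of_nat_eq_0_iff_char_dvd prime_dvd_power_nat)
  hence "CHAR('e) = p"
    using pk(1) prime_CHAR by (simp add: primes_dvd_imp_eq)
  thus ?thesis using pk(3) by auto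
qed

lemma frobenius_add: "((x :: 'e) + y) ^ q = x ^ q + y ^ q"
  using q_eq_CHAR_power prime_CHAR freshmans_dream' by blast

lemma frobenius_sum: "(sum (f :: _ \<Rightarrow> 'e) A) ^ q = (\<Sum>i\<in>A. f i ^ q)"
  using q_eq_CHAR_power prime_CHAR freshmans_dream_sum' by blast

lemma subfield_q_iff: "x \<in> subfield_q q \<longleftrightarrow> x ^ q = x"
  by (simp add: subfield_q_def)

lemma subfield_q_zero: "(0 :: 'e) \<in> subfield_q q"
  using q_ge_2 by (simp add: subfield_q_iff)

lemma subfield_q_one: "(1 :: 'e) \<in> subfield_q q"
  by (simp add: subfield_q_iff)

lemma subfield_q_add: "x \<in> subfield_q q \<Longrightarrow> y \<in> subfield_q q \<Longrightarrow> (x :: 'e) + y \<in> subfield_q q"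
  by (simp add: subfield_q_iff frobenius_add)

lemma subfield_q_mult: "x \<in> subfield_q q \<Longrightarrow> y \<in> subfield_q q \<Longrightarrow> (x :: 'e) * y \<in> subfield_q q"
  by (simp add: subfield_q_iff power_mult_distrib)

lemma subfield_q_uminus:
  assumes "(x :: 'e) \<in> subfield_q q"
  shows "- x \<in> subfield_q q"
proof -
  have "(- x) ^ q + x ^ q = 0" using frobenius_add[of "- x" x] q_ge_2 by (simp add: power_0_left)
  thus ?thesis using assms by (simp add: subfield_q_iff eq_neg_iff_add_eq_0)
qed

lemma subfield_q_sum: "(\<And>i. i \<in> A \<Longrightarrow> f i \<in> subfield_q q) \<Longrightarrow> (\<Sum>i\<in>A. f i :: 'e) \<in> subfield_q q"
  by (induction A rule: infinite_finite_induct) (auto intro: subfield_q_add subfield_q_zero)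

lemma power_in_subfield_q_iff: "\<alpha> ^ i \<in> subfield_q q \<longleftrightarrow> n dvd i * (q - 1)"
proof -
  have "\<alpha> ^ i \<in> subfield_q q \<longleftrightarrow> (i * q) mod n = i mod n"
    by (simp add: subfield_q_iff power_eq_power_iff flip: power_mult)
  also have "\<dots> \<longleftrightarrow> n dvd i * q - i"
    using q_ge_2 by (intro mod_eq_dvd_iff_nat) simp
  finally show ?thesis by (simp add: diff_mult_distrib2)
qed

lemma card_subfield_q: "card (subfield_q q :: 'e set) = q"
proof -
  define R where "R = (\<Sum>l<m. q ^ l)"
  have nR: "n = (q - 1) * R"
    unfolding R_def n_eq using q_ge_2 by (intro nat_geometric_sum[symmetric]) simp
  hence R_pos: "R > 0" using n_pos by (cases R) auto
  have "subfield_q q - {0} = (\<lambda>j. \<alpha> ^ (R * j)) ` {..<q - 1}"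
  proof (intro equalityI subsetI)
    fix x :: 'e assume x: "x \<in> subfield_q q - {0}"
    then obtain i where i: "i < n" "x = \<alpha> ^ i" using nonzero_eq_power by auto
    hence "(q - 1) * R dvd (q - 1) * i" using x nR by (simp add: power_in_subfield_q_iff mult.commute)
    hence "R dvd i" using q_ge_2 by simp
    then obtain j where "i = R * j" by blast
    moreover have "j < q - 1" using i nR R_pos \<open>i = R * j\<close> by (simp add: mult.commute)
    ultimately show "x \<in> (\<lambda>j. \<alpha> ^ (R * j)) ` {..<q - 1}" using i by auto
  next
    fix x assume "x \<in> (\<lambda>j. \<alpha> ^ (R * j)) ` {..<q - 1}"
    then obtain j where "x = \<alpha> ^ (R * j)" by blast
    moreover have "n dvd R * j * (q - 1)" using nR by simp
    ultimately show "x \<in> subfield_q q - {0}"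
      using primitive_nonzero by (simp add: power_in_subfield_q_iff)
  qed
  moreover have "inj_on (\<lambda>j. \<alpha> ^ (R * j)) {..<q - 1}"
  proof (rule inj_onI)
    fix j j' assume "j \<in> {..<q - 1}" "j' \<in> {..<q - 1}" "\<alpha> ^ (R * j) = \<alpha> ^ (R * j')"
    moreover have "R * j < n" "R * j' < n" using calculation nR R_pos by (auto simp: mult.commute)
    ultimately show "j = j'" using R_pos by (simp add: power_eq_power_iff)
  qed
  ultimately have "card (subfield_q q - {0 :: 'e}) = q - 1" by (simp add: card_image)
  thus ?thesis using card_Suc_Diff1[OF finite subfield_q_zero] q_ge_2 by simp
qed

lemma wt_complement_n: "t \<le> n \<Longrightarrow> wt q (n - t) + wt q t = m * (q - 1)"
  using wt_complement[OF q_ge_2, of t m] power_m_eq by simp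

end

section \<open>Polynomials with exponents of weight at most two\<close>

locale grm_field = prime_power_field \<alpha> n q m
  for \<alpha> :: "'e::{finite,field}" and n q m +
  assumes q_gt_2: "q > 2" and m_ge_2: "m \<ge> 2"
begin

definition lin_exps :: "nat set" where
  "lin_exps = (\<lambda>j. q ^ j) ` {..<m}"

definition quad_exps :: "nat set" where
  "quad_exps = (\<lambda>(j, k). q ^ j + q ^ k) ` {(j, k). j \<le> k \<and> k < m}"

definition low_exps :: "nat set" where
  "low_exps = insert 0 (lin_exps \<union> quad_exps)"

lemma power_add_power_less_n: "j < m \<Longrightarrow> k < m \<Longrightarrow> q ^ j + q ^ k < n"
proof -
  assume "j < m" "k < m"
  hence "q ^ j \<le> q ^ (m - 1)" "q ^ k \<le> q ^ (m - 1)" using q_gt_2 by (auto intro: power_increasing)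
  moreover have "q ^ 1 \<le> q ^ (m - 1)" using m_ge_2 q_gt_2 by (intro power_increasing) auto
  hence "q \<le> q ^ (m - 1)" by simp
  moreover have "q ^ m = q * q ^ (m - 1)" using m_ge_2 by (cases m) auto
  moreover have "3 * q ^ (m - 1) \<le> q * q ^ (m - 1)" using q_gt_2 by simp
  ultimately show ?thesis using q_gt_2 power_m_eq by linarith
qed

lemma power_less_n: "j < m \<Longrightarrow> q ^ j < n"
  using power_add_power_less_n[of j j] by simp

lemma power_add_power_in_quad_exps: "j < m \<Longrightarrow> k < m \<Longrightarrow> q ^ j + q ^ k \<in> quad_exps"
  unfolding quad_exps_def
  by (cases "j \<le> k") (auto intro: image_eqI[of _ _ "(j, k)"] image_eqI[of _ _ "(k, j)"])

lemma low_exps_less: "t \<in> low_exps \<Longrightarrow> t < n"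
  unfolding low_exps_def lin_exps_def quad_exps_def
  using n_pos power_less_n power_add_power_less_n by auto

lemma finite_low_exps: "finite low_exps"
  by (rule finite_subset[of _ "{..<n}"]) (use low_exps_less in auto)

lemma zero_notin_lin_quad: "0 \<notin> lin_exps \<union> quad_exps"
  unfolding lin_exps_def quad_exps_def using q_gt_2 by auto

lemma low_exps_iff_wt: "t \<le> n \<Longrightarrow> t \<in> low_exps \<longleftrightarrow> wt q t \<le> 2"
proof
  show "t \<in> low_exps \<Longrightarrow> wt q t \<le> 2"
    unfolding low_exps_def lin_exps_def quad_exps_def
    using q_gt_2 wt_power[of q] wt_power_add_power[OF q_gt_2] by auto
  assume "t \<le> n" "wt q t \<le> 2"
  moreover have "t < q ^ m" using \<open>t \<le> n\<close> power_m_eq by simp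
  ultimately have "t = 0 \<or> (\<exists>j<m. t = q ^ j) \<or> (\<exists>j k. j \<le> k \<and> k < m \<and> t = q ^ j + q ^ k)"
    using wt_le_2_cases[OF q_gt_2] by blast
  thus "t \<in> low_exps" unfolding low_exps_def lin_exps_def quad_exps_def by auto
qed

lemma card_low_exps: "card low_exps = 1 + m + m * (m + 1) div 2"
proof -
  have "card lin_exps = m"
    unfolding lin_exps_def using q_gt_2 by (subst card_image) (auto intro: inj_onI)
  moreover have "card quad_exps = card {(j, k). j \<le> k \<and> k < m}"
    unfolding quad_exps_def
    by (intro card_image inj_onI) (auto dest: power_add_power_inj[OF q_gt_2])
  moreover have "lin_exps \<inter> quad_exps = {}"
    unfolding lin_exps_def quad_exps_def using power_neq_power_add_power[OF q_gt_2] by auto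
  moreover have "finite lin_exps" "finite quad_exps"
    using finite_low_exps unfolding low_exps_def by auto
  ultimately show ?thesis
    unfolding low_exps_def using zero_notin_lin_quad by (simp add: card_Un_disjoint card_pairs_le)
qed

lemma coprime_q_n: "coprime q n"
proof (rule coprimeI)
  fix d assume d: "d dvd q" "d dvd n"
  have "q dvd Suc n" using m_pos power_m_eq by (metis dvd_power)
  hence "d dvd n + 1" using d(1) dvd_trans by auto
  thus "is_unit d" using d(2) dvd_add_right_iff[of d n 1] by simp
qed

text \<open>Multiplication by \<open>q\<close> modulo \<open>n = q ^ m - 1\<close> rotates the base-\<open>q\<close> digits of an
  exponent cyclically.\<close>

definition frob_shift :: "nat \<Rightarrow> nat" where
  "frob_shift t = (t * q) mod n"

lemma power_mod_n: "q ^ j mod n = q ^ (j mod m)"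
  using power_mod_power_minus_1[of q j m] power_less_n[of "j mod m"] q_gt_2 m_pos n_eq by simp

lemma frob_shift_power: "frob_shift (q ^ j) = q ^ (Suc j mod m)"
  unfolding frob_shift_def by (simp add: mult.commute power_mod_n flip: power_Suc)

lemma frob_shift_power_add_power:
  "frob_shift (q ^ j + q ^ k) = q ^ (Suc j mod m) + q ^ (Suc k mod m)"
proof -
  have "frob_shift (q ^ j + q ^ k) = (q ^ Suc j mod n + q ^ Suc k mod n) mod n"
    unfolding frob_shift_def by (simp add: algebra_simps mod_add_eq)
  also have "\<dots> = (q ^ (Suc j mod m) + q ^ (Suc k mod m)) mod n"
    by (simp only: power_mod_n)
  also have "\<dots> = q ^ (Suc j mod m) + q ^ (Suc k mod m)"
    using m_pos by (simp add: power_add_power_less_n)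
  finally show ?thesis .
qed

lemma frob_shift_low_exps: "t \<in> low_exps - {0} \<Longrightarrow> frob_shift t \<in> low_exps - {0}"
proof -
  assume "t \<in> low_exps - {0}"
  hence "t \<in> lin_exps \<or> t \<in> quad_exps" unfolding low_exps_def by auto
  hence "frob_shift t \<in> lin_exps \<union> quad_exps"
  proof
    assume "t \<in> lin_exps"
    thus ?thesis unfolding lin_exps_def using m_pos by (auto simp: frob_shift_power)
  next
    assume "t \<in> quad_exps"
    then obtain j k where "t = q ^ j + q ^ k" unfolding quad_exps_def by auto
    thus ?thesis
      using m_pos by (simp add: frob_shift_power_add_power power_add_power_in_quad_exps)
  qed
  thus ?thesis using zero_notin_lin_quad unfolding low_exps_def by auto
qed

lemma inj_on_frob_shift: "inj_on frob_shift {..<n}"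
proof (rule inj_onI)
  fix x y assume "x \<in> {..<n}" "y \<in> {..<n}" "frob_shift x = frob_shift y"
  hence "int (x * q) mod int n = int (y * q) mod int n"
    unfolding frob_shift_def by (metis of_nat_mod)
  hence "int n dvd (int x - int y) * int q"
    by (simp add: mod_eq_dvd_iff left_diff_distrib)
  hence dvd: "int n dvd int x - int y"
    using coprime_q_n by (simp add: coprime_dvd_mult_left_iff coprime_commute)
  show "x = y"
  proof (rule ccontr)
    assume "x \<noteq> y"
    hence "int n \<le> \<bar>int x - int y\<bar>" using dvd_imp_le_int[OF _ dvd] by simp
    thus False using \<open>x \<in> {..<n}\<close> \<open>y \<in> {..<n}\<close> by auto
  qed
qed

lemma bij_frob_shift: "bij_betw frob_shift (low_exps - {0}) (low_exps - {0})"
proof -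
  have "inj_on frob_shift (low_exps - {0})"
    using low_exps_less by (intro inj_on_subset[OF inj_on_frob_shift]) auto
  moreover have "frob_shift ` (low_exps - {0}) \<subseteq> low_exps - {0}"
    unfolding image_subset_iff using frob_shift_low_exps by blast
  ultimately show ?thesis
    using finite_low_exps by (simp add: bij_betw_def endo_inj_surj)
qed

lemma power_frob_shift:
  assumes "t \<in> low_exps - {0}"
  shows "(x :: 'e) ^ (t * q) = x ^ frob_shift t"
proof (cases "x = 0")
  case True
  thus ?thesis using assms frob_shift_low_exps[OF assms] q_gt_2 by (simp add: power_0_left)
qed (unfold frob_shift_def, rule nonzero_power_mod)

definition low_poly :: "(nat \<Rightarrow> 'e) \<Rightarrow> 'e \<Rightarrow> 'e" where
  "low_poly f x = (\<Sum>t\<in>low_exps. f t * x ^ t)"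

lemma low_poly_split: "low_poly f x = f 0 + (\<Sum>t\<in>low_exps - {0}. f t * x ^ t)"
  unfolding low_poly_def using finite_low_exps
  by (subst sum.remove[of _ 0]) (auto simp: low_exps_def)

lemma low_poly_at_0: "low_poly f 0 = f 0"
  by (auto simp: low_poly_split intro!: sum.neutral)

lemma low_poly_diff: "low_poly (\<lambda>t. f t - g t) x = low_poly f x - low_poly g x"
  unfolding low_poly_def by (simp add: sum_subtractf left_diff_distrib)

lemma low_poly_cong: "(\<And>t. t \<in> low_exps \<Longrightarrow> f t = g t) \<Longrightarrow> low_poly f x = low_poly g x"
  unfolding low_poly_def by (intro sum.cong) auto

lemma low_poly_power_q: "\<exists>g. \<forall>y. (low_poly f y) ^ q = low_poly g y"
proof -
  define g where
    "g t = (if t = 0 then f 0 ^ q else f (inv_into (low_exps - {0}) frob_shift t) ^ q)" for t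
  have "(low_poly f y) ^ q = low_poly g y" for y
  proof -
    have "(\<Sum>t\<in>low_exps - {0}. (f t * y ^ t) ^ q) =
        (\<Sum>t\<in>low_exps - {0}. g (frob_shift t) * y ^ frob_shift t)"
    proof (intro sum.cong refl)
      fix t assume t: "t \<in> low_exps - {0}"
      have "g (frob_shift t) = f t ^ q"
        using t frob_shift_low_exps[OF t] bij_betw_inv_into_left[OF bij_frob_shift t]
        by (simp add: g_def)
      thus "(f t * y ^ t) ^ q = g (frob_shift t) * y ^ frob_shift t"
        using t by (simp add: power_mult_distrib power_frob_shift flip: power_mult)
    qed
    also have "\<dots> = (\<Sum>s\<in>low_exps - {0}. g s * y ^ s)"
      by (rule sum.reindex_bij_betw[OF bij_frob_shift])
    finally show ?thesis
      unfolding low_poly_split by (simp add: frobenius_add frobenius_sum g_def)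
  qed
  thus ?thesis by blast
qed

definition unisolvent :: "'e set \<Rightarrow> bool" where
  "unisolvent I \<longleftrightarrow> (\<forall>f. (\<forall>x\<in>I. low_poly f x = 0) \<longrightarrow> (\<forall>t\<in>low_exps. f t = 0))"

lemma unisolvent_coeffs_eq:
  assumes "unisolvent I" and "\<forall>x\<in>I. low_poly f x = low_poly g x" and "t \<in> low_exps"
  shows "f t = g t"
proof -
  have "\<forall>x\<in>I. low_poly (\<lambda>t. f t - g t) x = 0" using assms(2) by (simp add: low_poly_diff)
  thus ?thesis using assms(1,3) unfolding unisolvent_def by fastforce
qed

lemma unisolvent_low_poly_eq:
  assumes "unisolvent I" and "\<forall>x\<in>I. low_poly f x = low_poly g x"
  shows "low_poly f y = low_poly g y"
  using unisolvent_coeffs_eq[OF assms] by (rule low_poly_cong)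

lemma low_poly_in_subfield_q:
  assumes "unisolvent I" and "\<forall>x\<in>I. low_poly f x \<in> subfield_q q"
  shows "low_poly f y \<in> subfield_q q"
proof -
  obtain g where g: "\<And>z. (low_poly f z) ^ q = low_poly g z" using low_poly_power_q by blast
  have "\<forall>x\<in>I. low_poly g x = low_poly f x" using assms(2) g by (simp add: subfield_q_iff)
  hence "low_poly g y = low_poly f y" using unisolvent_low_poly_eq[OF assms(1)] by blast
  thus ?thesis using g by (simp add: subfield_q_iff)
qed

lemma low_poly_interpolates:
  assumes uni: "unisolvent I" and card: "card I \<le> card low_exps"
  shows "\<exists>f. \<forall>x\<in>I. low_poly f x = v x"
proof -
  define R where "R f = restrict (low_poly f) I" for f
  have "inj_on R (low_exps \<rightarrow>\<^sub>E UNIV)"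
  proof (rule inj_onI)
    fix f g assume f: "f \<in> low_exps \<rightarrow>\<^sub>E UNIV" and g: "g \<in> low_exps \<rightarrow>\<^sub>E UNIV"
      and "R f = R g"
    hence "\<forall>x\<in>I. low_poly f x = low_poly g x" unfolding R_def by (metis restrict_apply')
    hence "\<forall>t\<in>low_exps. f t = g t" using unisolvent_coeffs_eq[OF uni] by blast
    thus "f = g" using f g by (auto simp: fun_eq_iff PiE_def extensional_def)
  qed
  hence "card (R ` (low_exps \<rightarrow>\<^sub>E UNIV)) = card (UNIV :: 'e set) ^ card low_exps"
    using finite_low_exps by (simp add: card_image card_PiE)
  moreover have "card (I \<rightarrow>\<^sub>E (UNIV :: 'e set)) = card (UNIV :: 'e set) ^ card I"
    by (simp add: card_PiE)
  ultimately have "card (I \<rightarrow>\<^sub>E (UNIV :: 'e set)) \<le> card (R ` (low_exps \<rightarrow>\<^sub>E UNIV))"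
    using card card_UNIV by (simp add: power_increasing)
  moreover have "R ` (low_exps \<rightarrow>\<^sub>E UNIV) \<subseteq> I \<rightarrow>\<^sub>E UNIV" unfolding R_def by auto
  ultimately have "R ` (low_exps \<rightarrow>\<^sub>E UNIV) = I \<rightarrow>\<^sub>E UNIV"
    by (intro card_seteq) (simp_all add: finite_PiE)
  hence "restrict v I \<in> R ` (low_exps \<rightarrow>\<^sub>E UNIV)" by simp
  then obtain f where "restrict v I = R f" by (rule imageE)
  thus ?thesis unfolding R_def by (metis restrict_apply')
qed

section \<open>Information sets from unisolvent point sets\<close>

lemma GRM_2_iff:
  "c \<in> GRM q 2 m \<longleftrightarrow> (\<forall>x. c x \<in> subfield_q q) \<and>
     (\<forall>s. s < n \<and> wt q s < m * (q - 1) - 2 \<longrightarrow> (\<Sum>x\<in>UNIV. c x * x ^ s) = 0)"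
  unfolding GRM_def by (simp add: n_eq)

lemma GRM_dual_iff:
  "c \<in> GRM q (m * (q - 1) - 3) m \<longleftrightarrow> (\<forall>x. c x \<in> subfield_q q) \<and>
     (\<forall>s. s < n \<and> wt q s < 3 \<longrightarrow> (\<Sum>x\<in>UNIV. c x * x ^ s) = 0)"
proof -
  have "m * (q - 1) \<ge> 2 * 2" using m_ge_2 q_gt_2 by (intro mult_mono) auto
  hence "m * (q - 1) - (m * (q - 1) - 3) = 3" by simp
  thus ?thesis unfolding GRM_def by (simp add: n_eq)
qed

lemma GRM_2_eq_low_poly:
  assumes "c \<in> GRM q 2 m"
  shows "c y = low_poly (interp_coeff c) y"
proof -
  have "interp_coeff c t = 0" if "t \<le> n" "t \<notin> low_exps" for t
  proof -
    have "t \<noteq> 0" using that by (auto simp: low_exps_def)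
    moreover have "wt q t > 2" using that low_exps_iff_wt by simp
    hence "wt q (n - t) < m * (q - 1) - 2" using wt_complement_n[OF \<open>t \<le> n\<close>] by linarith
    ultimately show ?thesis using assms \<open>t \<le> n\<close> by (simp add: GRM_2_iff interp_coeff_def)
  qed
  moreover have "low_exps \<subseteq> {..n}" using low_exps_less by fastforce
  ultimately show ?thesis
    unfolding low_poly_def interp_coeff_expansion[of c y] by (intro sum.mono_neutral_right) auto
qed

lemma sum_power_low_exps_add:
  assumes "t \<in> low_exps" and "s < n" and "wt q s < m * (q - 1) - 2"
  shows "(\<Sum>x\<in>UNIV. (x :: 'e) ^ (t + s)) = 0"
proof -
  have "\<not> (0 < t + s \<and> n dvd t + s)"
  proof
    assume "0 < t + s \<and> n dvd t + s"
    moreover have "t + s < 2 * n" using low_exps_less[OF assms(1)] assms(2) by simp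
    ultimately have "t + s = n" by (auto elim!: dvdE simp: less_2_cases_iff)
    hence "s = n - t" "t \<le> n" by auto
    hence "wt q s + wt q t = m * (q - 1)" using wt_complement_n[of t] by simp
    thus False using assms low_exps_iff_wt[of t] low_exps_less[OF assms(1)] by simp
  qed
  thus ?thesis by (simp add: sum_powers)
qed

lemma low_poly_in_GRM_2:
  assumes "\<And>x. low_poly f x \<in> subfield_q q"
  shows "low_poly f \<in> GRM q 2 m"
  unfolding GRM_2_iff
proof (intro conjI allI impI)
  fix s assume s: "s < n \<and> wt q s < m * (q - 1) - 2"
  have "(\<Sum>x\<in>UNIV. low_poly f x * x ^ s) = (\<Sum>t\<in>low_exps. f t * (\<Sum>x\<in>UNIV. x ^ (t + s)))"
    unfolding low_poly_def
    by (simp add: sum_distrib_left sum_distrib_right power_add mult.assoc sum.swap[of _ low_exps])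
  also have "\<dots> = 0" using s by (simp add: sum_power_low_exps_add)
  finally show "(\<Sum>x\<in>UNIV. low_poly f x * x ^ s) = 0" .
qed (rule assms)

lemma GRM_dual_orthogonal:
  assumes "c \<in> GRM q (m * (q - 1) - 3) m"
  shows "(\<Sum>x\<in>UNIV. c x * low_poly f x) = 0"
proof -
  have "(\<Sum>x\<in>UNIV. c x * low_poly f x) = (\<Sum>t\<in>low_exps. f t * (\<Sum>x\<in>UNIV. c x * x ^ t))"
    unfolding low_poly_def
    by (simp add: sum_distrib_left sum_distrib_right algebra_simps sum.swap[of _ low_exps])
  also have "\<dots> = 0"
  proof (intro sum.neutral ballI)
    fix t assume "t \<in> low_exps"
    hence "t < n" "wt q t < 3" using low_exps_less low_exps_iff_wt[of t] by fastforce+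
    thus "f t * (\<Sum>x\<in>UNIV. c x * x ^ t) = 0" using assms unfolding GRM_dual_iff by simp
  qed
  finally show ?thesis .
qed

lemma power_eq_low_poly:
  assumes "s \<in> low_exps"
  shows "x ^ s = low_poly (\<lambda>t. if t = s then 1 else 0) x"
proof -
  have "low_poly (\<lambda>t. if t = s then 1 else 0) x = (\<Sum>t\<in>low_exps. if t = s then x ^ t else 0)"
    unfolding low_poly_def by (intro sum.cong) auto
  thus ?thesis using assms finite_low_exps by simp
qed

definition lagrange_coeffs :: "'e set \<Rightarrow> 'e \<Rightarrow> nat \<Rightarrow> 'e" where
  "lagrange_coeffs I x0 = (SOME f. \<forall>x\<in>I. low_poly f x = (if x = x0 then 1 else 0))"

definition lagrange_basis :: "'e set \<Rightarrow> 'e \<Rightarrow> 'e \<Rightarrow> 'e" where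
  "lagrange_basis I x0 = low_poly (lagrange_coeffs I x0)"

context
  fixes I :: "'e set"
  assumes unisolvent: "unisolvent I" and card_le: "card I \<le> card low_exps"
begin

lemma inj_on_restrict_GRM_2: "inj_on (\<lambda>c. restrict c I) (GRM q 2 m)"
proof (rule inj_onI)
  fix c c' assume c: "c \<in> GRM q 2 m" and c': "c' \<in> GRM q 2 m"
    and "restrict c I = restrict c' I"
  hence "\<forall>x\<in>I. low_poly (interp_coeff c) x = low_poly (interp_coeff c') x"
    by (metis GRM_2_eq_low_poly restrict_apply')
  hence "low_poly (interp_coeff c) y = low_poly (interp_coeff c') y" for y
    using unisolvent_low_poly_eq[OF unisolvent] by blast
  thus "c = c'" using GRM_2_eq_low_poly[OF c] GRM_2_eq_low_poly[OF c'] by auto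
qed

lemma restrict_GRM_2_image: "(\<lambda>c. restrict c I) ` GRM q 2 m = I \<rightarrow>\<^sub>E subfield_q q"
proof (intro equalityI subsetI)
  fix v assume "v \<in> (\<lambda>c. restrict c I) ` GRM q 2 m"
  thus "v \<in> I \<rightarrow>\<^sub>E subfield_q q" by (auto simp: GRM_def)
next
  fix v :: "'e \<Rightarrow> 'e" assume v: "v \<in> I \<rightarrow>\<^sub>E subfield_q q"
  obtain f where f: "\<forall>x\<in>I. low_poly f x = v x"
    using low_poly_interpolates[OF unisolvent card_le] by blast
  hence "low_poly f \<in> GRM q 2 m"
    using v by (intro low_poly_in_GRM_2 low_poly_in_subfield_q[OF unisolvent]) auto
  moreover have "restrict (low_poly f) I = v"
    using f v by (auto simp: fun_eq_iff PiE_def extensional_def)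
  ultimately show "v \<in> (\<lambda>c. restrict c I) ` GRM q 2 m" by blast
qed

theorem info_set_GRM_2: "info_set (subfield_q q) (GRM q 2 m) I"
  using inj_on_restrict_GRM_2 restrict_GRM_2_image card_subfield_q q_gt_2
  by (intro info_setI) (auto simp: bij_betw_def)

lemma lagrange_basis_at:
  assumes "x \<in> I"
  shows "lagrange_basis I x0 x = (if x = x0 then 1 else 0)"
proof -
  have "\<exists>f. \<forall>x\<in>I. low_poly f x = (if x = x0 then 1 else 0)"
    by (rule low_poly_interpolates[OF unisolvent card_le])
  hence "\<forall>x\<in>I. low_poly (lagrange_coeffs I x0) x = (if x = x0 then 1 else 0)"
    unfolding lagrange_coeffs_def by (rule someI_ex)
  thus ?thesis using assms by (simp add: lagrange_basis_def)
qed

lemma lagrange_basis_in_subfield_q: "lagrange_basis I x0 y \<in> subfield_q q"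
  unfolding lagrange_basis_def using lagrange_basis_at subfield_q_zero subfield_q_one
  by (intro low_poly_in_subfield_q[OF unisolvent]) (simp add: lagrange_basis_def)

lemma low_poly_lagrange_expansion:
  "low_poly f y = (\<Sum>x0\<in>I. low_poly f x0 * lagrange_basis I x0 y)"
proof -
  define g where "g t = (\<Sum>x0\<in>I. low_poly f x0 * lagrange_coeffs I x0 t)" for t
  have g: "low_poly g z = (\<Sum>x0\<in>I. low_poly f x0 * lagrange_basis I x0 z)" for z
    unfolding g_def low_poly_def lagrange_basis_def
    by (simp add: sum_distrib_left sum_distrib_right mult.assoc sum.swap[of _ I])
  have "\<forall>x\<in>I. low_poly g x = low_poly f x"
    by (simp add: g lagrange_basis_at if_distrib[of "\<lambda>v. _ * v"] cong: if_cong)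
  hence "low_poly g y = low_poly f y" by (rule unisolvent_low_poly_eq[OF unisolvent])
  thus ?thesis using g by simp
qed

lemma inj_on_restrict_GRM_dual:
  "inj_on (\<lambda>c. restrict c (UNIV - I)) (GRM q (m * (q - 1) - 3) m)"
proof (rule inj_onI)
  fix c c' assume c: "c \<in> GRM q (m * (q - 1) - 3) m" and c': "c' \<in> GRM q (m * (q - 1) - 3) m"
    and "restrict c (UNIV - I) = restrict c' (UNIV - I)"
  hence outside: "\<forall>x\<in>UNIV - I. c x = c' x" by (metis restrict_apply')
  have "c x0 = c' x0" if "x0 \<in> I" for x0
  proof -
    have "0 = (\<Sum>x\<in>UNIV. (c x - c' x) * lagrange_basis I x0 x)"
      using GRM_dual_orthogonal[OF c] GRM_dual_orthogonal[OF c']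
      by (simp add: lagrange_basis_def left_diff_distrib sum_subtractf)
    also have "\<dots> = (\<Sum>x\<in>I. (c x - c' x) * lagrange_basis I x0 x)"
      using outside by (intro sum.mono_neutral_right) auto
    also have "\<dots> = c x0 - c' x0"
      using that by (simp add: lagrange_basis_at if_distrib[of "\<lambda>v. _ * v"] cong: if_cong)
    finally show ?thesis by simp
  qed
  thus "c = c'" using outside by (auto simp: fun_eq_iff)
qed

lemma dual_extension_in_GRM:
  assumes v: "\<forall>y\<in>UNIV - I. v y \<in> subfield_q q"
  defines "c \<equiv> \<lambda>x. if x \<in> I then - (\<Sum>y\<in>UNIV - I. v y * lagrange_basis I x y) else v x"
  shows "c \<in> GRM q (m * (q - 1) - 3) m"
  unfolding GRM_dual_iff
proof (intro conjI allI impI)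
  fix x show "c x \<in> subfield_q q"
    unfolding c_def using v lagrange_basis_in_subfield_q
    by (auto intro!: subfield_q_uminus subfield_q_sum subfield_q_mult)
next
  fix s assume "s < n \<and> wt q s < 3"
  hence s: "s \<in> low_exps" using low_exps_iff_wt by simp
  have monomial: "y ^ s = (\<Sum>x\<in>I. x ^ s * lagrange_basis I x y)" for y
  proof -
    have "y ^ s = low_poly (\<lambda>t. if t = s then 1 else 0) y" by (rule power_eq_low_poly[OF s])
    also have "\<dots> = (\<Sum>x\<in>I. low_poly (\<lambda>t. if t = s then 1 else 0) x * lagrange_basis I x y)"
      by (rule low_poly_lagrange_expansion)
    finally show ?thesis by (simp flip: power_eq_low_poly[OF s])
  qed
  have "(\<Sum>x\<in>UNIV. c x * x ^ s) = (\<Sum>x\<in>I. c x * x ^ s) + (\<Sum>y\<in>UNIV - I. v y * y ^ s)"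
    using sum.subset_diff[of I UNIV "\<lambda>x. c x * x ^ s"] by (simp add: c_def add.commute)
  also have "(\<Sum>y\<in>UNIV - I. v y * y ^ s) =
      (\<Sum>y\<in>UNIV - I. \<Sum>x\<in>I. x ^ s * (v y * lagrange_basis I x y))"
    by (intro sum.cong refl) (subst monomial, simp add: sum_distrib_left mult_ac)
  also have "\<dots> = (\<Sum>x\<in>I. x ^ s * (\<Sum>y\<in>UNIV - I. v y * lagrange_basis I x y))"
    by (subst sum.swap) (simp only: sum_distrib_left)
  also have "(\<Sum>x\<in>I. c x * x ^ s) = - (\<Sum>x\<in>I. x ^ s * (\<Sum>y\<in>UNIV - I. v y * lagrange_basis I x y))"
    by (simp add: c_def sum_negf mult.commute)
  finally show "(\<Sum>x\<in>UNIV. c x * x ^ s) = 0" by simp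
qed

lemma restrict_GRM_dual_image:
  "(\<lambda>c. restrict c (UNIV - I)) ` GRM q (m * (q - 1) - 3) m = (UNIV - I) \<rightarrow>\<^sub>E subfield_q q"
proof (intro equalityI subsetI)
  fix v assume "v \<in> (\<lambda>c. restrict c (UNIV - I)) ` GRM q (m * (q - 1) - 3) m"
  thus "v \<in> (UNIV - I) \<rightarrow>\<^sub>E subfield_q q" by (auto simp: GRM_def)
next
  fix v :: "'e \<Rightarrow> 'e" assume v: "v \<in> (UNIV - I) \<rightarrow>\<^sub>E subfield_q q"
  let ?c = "\<lambda>x. if x \<in> I then - (\<Sum>y\<in>UNIV - I. v y * lagrange_basis I x y) else v x"
  have "?c \<in> GRM q (m * (q - 1) - 3) m" using v by (intro dual_extension_in_GRM) auto
  moreover have "restrict ?c (UNIV - I) = v"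
    using v by (auto simp: fun_eq_iff PiE_def extensional_def)
  ultimately show "v \<in> (\<lambda>c. restrict c (UNIV - I)) ` GRM q (m * (q - 1) - 3) m"
    by (intro image_eqI[of _ _ ?c]) simp_all
qed

theorem info_set_GRM_dual: "info_set (subfield_q q) (GRM q (m * (q - 1) - 3) m) (UNIV - I)"
  using inj_on_restrict_GRM_dual restrict_GRM_dual_image card_subfield_q q_gt_2
  by (intro info_setI) (auto simp: bij_betw_def)

end

end

section \<open>The point set of the theorem\<close>

lemma exponent_factor_bounds:
  fixes q a b r2 :: nat
  assumes "q ^ (a * b) - 1 = (q ^ a - 1) * r2" and "q ^ a - 1 > 1" and "r2 > 1"
  shows "a \<ge> 1" and "b \<ge> 2"
proof -
  show "a \<ge> 1" using assms(2) by (cases a) auto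
  show "b \<ge> 2"
  proof (rule ccontr)
    assume "\<not> b \<ge> 2"
    hence "b = 0 \<or> b = 1" by auto
    moreover have "(q ^ a - 1) * 1 < (q ^ a - 1) * r2" using assms(2,3) by (intro mult_strict_left_mono) auto
    ultimately show False using assms(1) by auto
  qed
qed

lemma triangular_le_power_3: "a * (a + 3) + 2 \<le> 2 * 3 ^ a"
proof (induction a)
  case (Suc a)
  have "3 ^ a \<ge> a + 1" by (induction a) auto
  thus ?case using Suc.IH by (simp add: algebra_simps)
qed simp

lemma square_le_sum_power_3: "b ^ 2 \<le> (\<Sum>l<b. (3::nat) ^ l)"
proof (induction b)
  case (Suc b)
  have "3 ^ b \<ge> 2 * b + 1" by (induction b) auto
  thus ?case using Suc.IH by (simp add: power2_eq_square algebra_simps)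
qed simp

lemma even_mult_pred: "even (x * (x - 1 :: nat))"
  by (cases "even x") auto

locale crt_setting = grm_field \<alpha> n q m
  for \<alpha> :: "'e::{finite,field}" and n q m +
  fixes r1 r2 a b :: nat and T :: "nat \<Rightarrow> nat \<times> nat" and \<Gamma> :: "(nat \<times> nat) set"
  assumes n_factors: "n = r1 * r2" and r1_gt_1: "r1 > 1" and r2_gt_1: "r2 > 1"
    and coprime_r1_r2: "coprime r1 r2" and r1_eq: "r1 = q ^ a - 1" and m_eq: "m = a * b"
    and T_bij: "bij_betw T {..<n} ({..<r1} \<times> {..<r2})"
    and T_add: "\<forall>i<n. \<forall>j<n. T ((i + j) mod n) =
           ((fst (T i) + fst (T j)) mod r1, (snd (T i) + snd (T j)) mod r2)"
    and \<Gamma>_eq: "\<Gamma> = {(i1, i2). i1 < a * (a - 1) div 2 \<and> i2 < b ^ 2}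
          \<union> {(i1, i2). a * (a - 1) div 2 \<le> i1 \<and> i1 < a * (a + 1) div 2 \<and> i2 < b * (b + 1) div 2}
          \<union> {(i1, i2). a * (a + 1) div 2 \<le> i1 \<and> i1 < a * (a + 3) div 2 \<and> i2 < b}"
begin

lemma a_pos: "a \<ge> 1" and b_ge_2: "b \<ge> 2"
  using exponent_factor_bounds[of q a b r2] n_eq n_factors r1_eq m_eq r1_gt_1 r2_gt_1 by auto

lemma T_mem: "i < n \<Longrightarrow> fst (T i) < r1 \<and> snd (T i) < r2"
proof -
  assume "i < n"
  hence "T i \<in> {..<r1} \<times> {..<r2}" using T_bij unfolding bij_betw_def by blast
  thus ?thesis by (auto simp: mem_Times_iff)
qed

lemma T_zero: "T 0 = (0, 0)"
proof -
  obtain x y where xy: "T 0 = (x, y)" by (cases "T 0")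
  have "T ((0 + 0) mod n) = ((fst (T 0) + fst (T 0)) mod r1, (snd (T 0) + snd (T 0)) mod r2)"
    using T_add n_pos by blast
  hence "x = (x + x) mod r1" "y = (y + y) mod r2" using xy by simp_all
  moreover have "x < r1" "y < r2" using T_mem[OF n_pos] xy by auto
  moreover have "z = (z + z) mod r \<Longrightarrow> z < r \<Longrightarrow> z = 0" for z r :: nat
    by (cases "z + z < r") (auto simp: le_mod_geq)
  ultimately show ?thesis using xy by simp
qed

lemma T_add_mod:
  "T ((x + y) mod n) = ((fst (T (x mod n)) + fst (T (y mod n))) mod r1,
                        (snd (T (x mod n)) + snd (T (y mod n))) mod r2)"
proof -
  have "(x + y) mod n = (x mod n + y mod n) mod n" by (simp add: mod_add_eq)
  thus ?thesis using T_add n_pos by simp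
qed

lemma T_mult_mod: "T ((k * e) mod n) = ((k * fst (T (e mod n))) mod r1, (k * snd (T (e mod n))) mod r2)"
proof (induction k)
  case (Suc k)
  have "T ((Suc k * e) mod n) = T ((k * e + e) mod n)" by (simp add: add.commute)
  thus ?case
    unfolding T_add_mod Suc.IH by (simp add: mod_add_left_eq mod_add_right_eq add.commute)
qed (simp add: T_zero)

lemma T_mod_eq_iff: "T (x mod n) = T (y mod n) \<longleftrightarrow> x mod n = y mod n"
  using T_bij n_pos unfolding bij_betw_def by (auto dest: inj_onD)

definition beta_exp :: nat where "beta_exp = inv_into {..<n} T (1, 0)"
definition gamma_exp :: nat where "gamma_exp = inv_into {..<n} T (0, 1)"

lemma T_beta_exp: "beta_exp < n" "T beta_exp = (1, 0)"
  and T_gamma_exp: "gamma_exp < n" "T gamma_exp = (0, 1)"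
proof -
  have units: "(1, 0) \<in> T ` {..<n}" "(0, 1) \<in> T ` {..<n}"
    using T_bij r1_gt_1 r2_gt_1 by (auto simp: bij_betw_def)
  show "beta_exp < n" "T beta_exp = (1, 0)"
    unfolding beta_exp_def using inv_into_into[OF units(1)] f_inv_into_f[OF units(1)] by simp_all
  show "gamma_exp < n" "T gamma_exp = (0, 1)"
    unfolding gamma_exp_def using inv_into_into[OF units(2)] f_inv_into_f[OF units(2)] by simp_all
qed

definition \<beta> :: 'e where "\<beta> = \<alpha> ^ beta_exp"
definition \<gamma> :: 'e where "\<gamma> = \<alpha> ^ gamma_exp"

lemma beta_power_eq_iff: "\<beta> ^ k = \<beta> ^ l \<longleftrightarrow> k mod r1 = l mod r1"
proof -
  have "\<beta> ^ k = \<beta> ^ l \<longleftrightarrow> T ((k * beta_exp) mod n) = T ((l * beta_exp) mod n)"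
    by (simp add: \<beta>_def power_eq_power_iff T_mod_eq_iff mult.commute flip: power_mult)
  thus ?thesis unfolding T_mult_mod using T_beta_exp by simp
qed

lemma gamma_power_eq_iff: "\<gamma> ^ k = \<gamma> ^ l \<longleftrightarrow> k mod r2 = l mod r2"
proof -
  have "\<gamma> ^ k = \<gamma> ^ l \<longleftrightarrow> T ((k * gamma_exp) mod n) = T ((l * gamma_exp) mod n)"
    by (simp add: \<gamma>_def power_eq_power_iff T_mod_eq_iff mult.commute flip: power_mult)
  thus ?thesis unfolding T_mult_mod using T_gamma_exp by simp
qed

lemma grid_point_eq_power:
  assumes "i1 < r1" "i2 < r2"
  shows "\<exists>i<n. T i = (i1, i2) \<and> \<beta> ^ i1 * \<gamma> ^ i2 = \<alpha> ^ i"
proof -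
  define x where "x = i1 * beta_exp + i2 * gamma_exp"
  have "T (x mod n) = (i1, i2)" unfolding x_def T_add_mod T_mult_mod using T_beta_exp T_gamma_exp assms by simp
  moreover have "\<beta> ^ i1 * \<gamma> ^ i2 = \<alpha> ^ x"
    unfolding x_def \<beta>_def \<gamma>_def by (simp add: power_add mult.commute flip: power_mult)
  hence "\<beta> ^ i1 * \<gamma> ^ i2 = \<alpha> ^ (x mod n)" by (metis nonzero_power_mod primitive_nonzero)
  ultimately show ?thesis using n_pos by (intro exI[of _ "x mod n"]) auto
qed

lemma chinese_remainder:
  assumes "s < n" "s' < n" "\<beta> ^ s = \<beta> ^ s'" "\<gamma> ^ s = \<gamma> ^ s'"
  shows "s = s'"
proof -
  have "r1 dvd nat \<bar>int s - int s'\<bar>" "r2 dvd nat \<bar>int s - int s'\<bar>"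
    using assms(3,4) by (simp_all add: beta_power_eq_iff gamma_power_eq_iff mod_eq_iff_dvd_symdiff_nat)
  hence "n dvd nat \<bar>int s - int s'\<bar>" using coprime_r1_r2 n_factors by (simp add: divides_mult)
  hence "s mod n = s' mod n" by (simp add: mod_eq_iff_dvd_symdiff_nat)
  thus ?thesis using assms(1,2) by simp
qed

lemma r1_bound: "a * (a + 3) div 2 \<le> r1"
proof -
  have "3 ^ a \<le> q ^ a" using q_gt_2 by (intro power_mono) auto
  thus ?thesis using triangular_le_power_3[of a] r1_eq by linarith
qed

lemma r2_bound: "b ^ 2 \<le> r2"
proof -
  have "r1 * (\<Sum>l<b. (q ^ a) ^ l) = r1 * r2"
    using nat_geometric_sum[of "q ^ a" b] q_gt_2 n_eq n_factors m_eq r1_eq by (simp add: power_mult)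
  hence "r2 = (\<Sum>l<b. (q ^ a) ^ l)" using r1_gt_1 by simp
  moreover have "q ^ 1 \<le> q ^ a" using q_gt_2 a_pos by (intro power_increasing) auto
  hence "(\<Sum>l<b. (3::nat) ^ l) \<le> (\<Sum>l<b. (q ^ a) ^ l)"
    using q_gt_2 by (intro sum_mono power_mono) auto
  ultimately show ?thesis using square_le_sum_power_3[of b] by linarith
qed

lemma power_mod_r1: "q ^ j mod r1 = q ^ (j mod a) mod r1"
  using power_mod_power_minus_1[of q j a] q_gt_2 r1_eq by simp

lemma beta_power_q_power: "\<beta> ^ (q ^ j) = \<beta> ^ (q ^ (j mod a))"
  unfolding beta_power_eq_iff by (rule power_mod_r1)

lemma beta_power_add_power: "\<beta> ^ (q ^ j + q ^ k) = \<beta> ^ (q ^ (j mod a) + q ^ (k mod a))"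
proof -
  have "(q ^ j + q ^ k) mod r1 = (q ^ j mod r1 + q ^ k mod r1) mod r1" by (rule mod_add_eq[symmetric])
  also have "\<dots> = (q ^ (j mod a) mod r1 + q ^ (k mod a) mod r1) mod r1"
    by (simp only: power_mod_r1[of j] power_mod_r1[of k])
  also have "\<dots> = (q ^ (j mod a) + q ^ (k mod a)) mod r1" by (rule mod_add_eq)
  finally show ?thesis unfolding beta_power_eq_iff .
qed

lemma power_less_r1: "u < a \<Longrightarrow> 1 \<le> q ^ u \<and> q ^ u < r1"
  and power_add_power_less_r1: "u < a \<Longrightarrow> v < a \<Longrightarrow> q ^ u + q ^ v \<le> r1"
proof -
  have "q ^ a = q * q ^ (a - 1)" using a_pos by (cases a) auto
  hence r1_ge: "r1 + 1 \<ge> 3 * q ^ (a - 1)" using r1_eq q_gt_2 by simp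
  have le: "u < a \<Longrightarrow> q ^ u \<le> q ^ (a - 1)" for u using q_gt_2 by (intro power_increasing) auto
  have "q ^ (a - 1) \<ge> 1" using q_gt_2 by simp
  show "u < a \<Longrightarrow> 1 \<le> q ^ u \<and> q ^ u < r1"
  proof
    assume "u < a"
    hence "q ^ u \<le> q ^ (a - 1)" by (rule le)
    thus "q ^ u < r1" using r1_ge \<open>q ^ (a - 1) \<ge> 1\<close> by linarith
  qed (use q_gt_2 in simp)
  show "u < a \<Longrightarrow> v < a \<Longrightarrow> q ^ u + q ^ v \<le> r1"
    using le[of u] le[of v] r1_ge \<open>q ^ (a - 1) \<ge> 1\<close> by linarith
qed

lemma beta_power_inj:
  assumes "1 \<le> x" "x \<le> r1" "1 \<le> y" "y \<le> r1" "\<beta> ^ x = \<beta> ^ y"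
  shows "x = y"
proof -
  have mod_r1: "z mod r1 = (if z = r1 then 0 else z)" if "z \<le> r1" for z
    using that by auto
  have "x mod r1 = y mod r1" using assms(5) by (simp add: beta_power_eq_iff)
  thus ?thesis using assms(1-4) mod_r1[of x] mod_r1[of y] by (auto split: if_splits)
qed

lemma beta_power_add_power_eq:
  assumes "u < a" "v < a" "u' < a" "v' < a" "u \<le> v"
    and "\<beta> ^ (q ^ u' + q ^ v') = \<beta> ^ (q ^ u + q ^ v)"
  shows "(u' = u \<and> v' = v) \<or> (u' = v \<and> v' = u)"
proof -
  have "q ^ u' + q ^ v' \<le> r1" "q ^ u + q ^ v \<le> r1"
    using assms(1-4) power_add_power_less_r1 by auto
  moreover have "1 \<le> q ^ u'" "1 \<le> q ^ u" using assms(1,3) power_less_r1 by auto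
  ultimately have "q ^ u' + q ^ v' = q ^ u + q ^ v"
    using assms(6) by (intro beta_power_inj) linarith+
  thus ?thesis
    using power_add_power_inj[OF q_gt_2, of u' v' u v] power_add_power_inj[OF q_gt_2, of v' u' u v] assms(5)
    by (cases "u' \<le> v'") (auto simp: add.commute)
qed

definition aligned_exps :: "nat set" where
  "aligned_exps = (\<lambda>(j, k). q ^ j + q ^ k) ` {(j, k). j \<le> k \<and> k < m \<and> j mod a = k mod a}"

definition mixed_exps :: "nat set" where
  "mixed_exps = (\<lambda>(j, k). q ^ j + q ^ k) ` {(j, k). j \<le> k \<and> k < m \<and> j mod a \<noteq> k mod a}"

lemma quad_exps_split: "quad_exps = aligned_exps \<union> mixed_exps"
  unfolding quad_exps_def aligned_exps_def mixed_exps_def by auto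

lemma exponent_digits: "j < m \<Longrightarrow> j = j mod a + a * (j div a) \<and> j mod a < a \<and> j div a < b"
  using a_pos m_eq by (simp add: less_mult_imp_div_less mult.commute)

lemma card_fibre_lin:
  assumes j: "j < m"
  shows "card {t \<in> low_exps - {0}. \<beta> ^ t = \<beta> ^ (q ^ j)} \<le> b"
proof -
  let ?u = "j mod a"
  have "{t \<in> low_exps - {0}. \<beta> ^ t = \<beta> ^ (q ^ j)} \<subseteq> (\<lambda>x. q ^ (?u + a * x)) ` {..<b}"
  proof
    fix t assume t: "t \<in> {t \<in> low_exps - {0}. \<beta> ^ t = \<beta> ^ (q ^ j)}"
    hence label: "\<beta> ^ t = \<beta> ^ (q ^ ?u)" using beta_power_q_power[of j] by simp
    have "t \<in> lin_exps \<or> t \<in> quad_exps" using t by (auto simp: low_exps_def)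
    thus "t \<in> (\<lambda>x. q ^ (?u + a * x)) ` {..<b}"
    proof
      assume "t \<in> lin_exps"
      then obtain j' where j': "j' < m" "t = q ^ j'" unfolding lin_exps_def by auto
      have "\<beta> ^ (q ^ (j' mod a)) = \<beta> ^ (q ^ ?u)" using label j' beta_power_q_power by simp
      hence "q ^ (j' mod a) = q ^ ?u"
        using power_less_r1 exponent_digits[OF j] exponent_digits[OF j'(1)]
        by (intro beta_power_inj) (auto simp: less_imp_le)
      hence "j' mod a = ?u" using q_gt_2 by simp
      thus ?thesis using j' exponent_digits[OF j'(1)] by (auto intro!: image_eqI[of _ _ "j' div a"])
    next
      assume "t \<in> quad_exps"
      then obtain j' k' where "t = q ^ j' + q ^ k'" unfolding quad_exps_def by auto
      hence "\<beta> ^ (q ^ (j' mod a) + q ^ (k' mod a)) = \<beta> ^ (q ^ ?u)"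
        using label beta_power_add_power by simp
      hence "q ^ (j' mod a) + q ^ (k' mod a) = q ^ ?u"
        using power_less_r1 power_add_power_less_r1 a_pos
        by (intro beta_power_inj) (auto simp: less_imp_le add_increasing)
      thus ?thesis using power_neq_power_add_power[OF q_gt_2] by metis
    qed
  qed
  hence "card {t \<in> low_exps - {0}. \<beta> ^ t = \<beta> ^ (q ^ j)} \<le> card ((\<lambda>x. q ^ (?u + a * x)) ` {..<b})"
    by (intro card_mono) auto
  also have "\<dots> \<le> b" using card_image_le[of "{..<b}"] by simp
  finally show ?thesis .
qed

lemma card_fibre_aligned:
  assumes t: "t \<in> aligned_exps"
  shows "card {s \<in> quad_exps. \<beta> ^ s = \<beta> ^ t} \<le> b * (b + 1) div 2"
proof -
  obtain j k where jk: "j \<le> k" "k < m" "j mod a = k mod a" "t = q ^ j + q ^ k"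
    using t unfolding aligned_exps_def by auto
  let ?u = "j mod a"
  let ?f = "\<lambda>(x, y). q ^ (?u + a * x) + q ^ (?u + a * y)"
  have "{s \<in> quad_exps. \<beta> ^ s = \<beta> ^ t} \<subseteq> ?f ` {(x, y). x \<le> y \<and> y < b}"
  proof
    fix s assume s: "s \<in> {s \<in> quad_exps. \<beta> ^ s = \<beta> ^ t}"
    then obtain j' k' where jk': "j' \<le> k'" "k' < m" "s = q ^ j' + q ^ k'"
      unfolding quad_exps_def by auto
    have "\<beta> ^ (q ^ (j' mod a) + q ^ (k' mod a)) = \<beta> ^ (q ^ ?u + q ^ ?u)"
      using s jk jk' beta_power_add_power[of j' k'] beta_power_add_power[of j k] by simp
    moreover have "?u < a" "j' mod a < a" "k' mod a < a" using a_pos by simp_all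
    ultimately have "j' mod a = ?u" "k' mod a = ?u"
      using beta_power_add_power_eq[of ?u ?u "j' mod a" "k' mod a"] by auto
    moreover have "j' div a \<le> k' div a" "k' div a < b"
      using jk' exponent_digits by (auto intro: div_le_mono)
    ultimately show "s \<in> ?f ` {(x, y). x \<le> y \<and> y < b}"
      using jk' exponent_digits[of j'] exponent_digits[of k']
      by (intro image_eqI[of _ _ "(j' div a, k' div a)"]) auto
  qed
  hence "card {s \<in> quad_exps. \<beta> ^ s = \<beta> ^ t} \<le> card (?f ` {(x, y). x \<le> y \<and> y < b})"
    by (intro card_mono) (auto simp: finite_pairs_le)
  also have "\<dots> \<le> card {(x, y). x \<le> y \<and> y < b}" by (rule card_image_le[OF finite_pairs_le])
  finally show ?thesis by (simp add: card_pairs_le)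
qed

lemma card_fibre_mixed:
  assumes t: "t \<in> mixed_exps"
  shows "card {s \<in> mixed_exps. \<beta> ^ s = \<beta> ^ t} \<le> b ^ 2"
proof -
  obtain j k where jk: "j \<le> k" "k < m" "j mod a \<noteq> k mod a" "t = q ^ j + q ^ k"
    using t unfolding mixed_exps_def by auto
  define u v where "u = min (j mod a) (k mod a)" and "v = max (j mod a) (k mod a)"
  have uv: "u < a" "v < a" "u \<le> v" using a_pos by (auto simp: u_def v_def min_def max_def)
  have t_label: "\<beta> ^ t = \<beta> ^ (q ^ u + q ^ v)"
    using jk beta_power_add_power[of j k] by (auto simp: u_def v_def min_def max_def add.commute)
  let ?f = "\<lambda>(x, y). q ^ (u + a * x) + q ^ (v + a * y)"
  have "{s \<in> mixed_exps. \<beta> ^ s = \<beta> ^ t} \<subseteq> ?f ` ({..<b} \<times> {..<b})"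
  proof
    fix s assume s: "s \<in> {s \<in> mixed_exps. \<beta> ^ s = \<beta> ^ t}"
    then obtain j' k' where jk': "j' < m" "k' < m" "s = q ^ j' + q ^ k'"
      unfolding mixed_exps_def by (auto dest: le_less_trans)
    have "\<beta> ^ (q ^ (j' mod a) + q ^ (k' mod a)) = \<beta> ^ (q ^ u + q ^ v)"
      using s jk' t_label beta_power_add_power[of j' k'] by simp
    moreover have "j' mod a < a" "k' mod a < a" using a_pos by simp_all
    ultimately have "(j' mod a = u \<and> k' mod a = v) \<or> (j' mod a = v \<and> k' mod a = u)"
      using beta_power_add_power_eq[OF uv(1,2)] uv(3) by blast
    thus "s \<in> ?f ` ({..<b} \<times> {..<b})"
      using jk' exponent_digits[OF jk'(1)] exponent_digits[OF jk'(2)]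
      by (auto intro: image_eqI[of _ _ "(j' div a, k' div a)"] image_eqI[of _ _ "(k' div a, j' div a)"]
          simp: add.commute)
  qed
  hence "card {s \<in> mixed_exps. \<beta> ^ s = \<beta> ^ t} \<le> card (?f ` ({..<b} \<times> {..<b}))"
    by (intro card_mono) auto
  also have "\<dots> \<le> card ({..<b} \<times> {..<b})" by (rule card_image_le) simp
  finally show ?thesis by (simp add: power2_eq_square)
qed

lemma beta_power_add_power_label:
  obtains u v where "u \<le> v" "v < a" "u = v \<longleftrightarrow> j mod a = k mod a"
    "\<beta> ^ (q ^ j + q ^ k) = \<beta> ^ (q ^ u + q ^ v)"
proof (cases "j mod a \<le> k mod a")
  case True
  thus ?thesis using that[of "j mod a" "k mod a"] beta_power_add_power[of j k] a_pos by auto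
next
  case False
  thus ?thesis using that[of "k mod a" "j mod a"] beta_power_add_power[of j k] a_pos
    by (auto simp: add.commute)
qed

lemma card_labels_quad: "card ((\<lambda>t. \<beta> ^ t) ` quad_exps) \<le> a * (a + 1) div 2"
proof -
  have "(\<lambda>t. \<beta> ^ t) ` quad_exps \<subseteq> (\<lambda>(u, v). \<beta> ^ (q ^ u + q ^ v)) ` {(u, v). u \<le> v \<and> v < a}"
  proof
    fix y assume "y \<in> (\<lambda>t. \<beta> ^ t) ` quad_exps"
    then obtain j k where "y = \<beta> ^ (q ^ j + q ^ k)" unfolding quad_exps_def by auto
    moreover obtain u v where "u \<le> v" "v < a" "\<beta> ^ (q ^ j + q ^ k) = \<beta> ^ (q ^ u + q ^ v)"
      by (rule beta_power_add_power_label)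
    ultimately show "y \<in> (\<lambda>(u, v). \<beta> ^ (q ^ u + q ^ v)) ` {(u, v). u \<le> v \<and> v < a}"
      by (intro image_eqI[of _ _ "(u, v)"]) auto
  qed
  thus ?thesis using surj_card_le[OF finite_pairs_le] by (simp add: card_pairs_le)
qed

lemma card_labels_mixed: "card ((\<lambda>t. \<beta> ^ t) ` mixed_exps) \<le> a * (a - 1) div 2"
proof -
  have "(\<lambda>t. \<beta> ^ t) ` mixed_exps \<subseteq> (\<lambda>(u, v). \<beta> ^ (q ^ u + q ^ v)) ` {(u, v). u < v \<and> v < a}"
  proof
    fix y assume "y \<in> (\<lambda>t. \<beta> ^ t) ` mixed_exps"
    then obtain j k where "y = \<beta> ^ (q ^ j + q ^ k)" "j mod a \<noteq> k mod a"
      unfolding mixed_exps_def by auto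
    moreover obtain u v where "u \<le> v" "v < a" "u = v \<longleftrightarrow> j mod a = k mod a"
      "\<beta> ^ (q ^ j + q ^ k) = \<beta> ^ (q ^ u + q ^ v)"
      by (rule beta_power_add_power_label)
    ultimately show "y \<in> (\<lambda>(u, v). \<beta> ^ (q ^ u + q ^ v)) ` {(u, v). u < v \<and> v < a}"
      by (intro image_eqI[of _ _ "(u, v)"]) auto
  qed
  thus ?thesis using surj_card_le[OF finite_pairs_less] by (simp add: card_pairs_less)
qed

lemma card_labels_low: "card ((\<lambda>t. \<beta> ^ t) ` (low_exps - {0})) \<le> a * (a + 3) div 2"
proof -
  have "(\<lambda>t. \<beta> ^ t) ` (low_exps - {0}) \<subseteq> (\<lambda>u. \<beta> ^ (q ^ u)) ` {..<a} \<union> (\<lambda>t. \<beta> ^ t) ` quad_exps"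
    unfolding low_exps_def lin_exps_def using beta_power_q_power a_pos by fastforce
  hence "card ((\<lambda>t. \<beta> ^ t) ` (low_exps - {0}))
      \<le> card ((\<lambda>u. \<beta> ^ (q ^ u)) ` {..<a}) + card ((\<lambda>t. \<beta> ^ t) ` quad_exps)"
    by (meson card_Un_le card_mono finite_UnI finite_imageI finite_lessThan finite order_trans)
  also have "\<dots> \<le> a + a * (a + 1) div 2"
    using card_labels_quad card_image_le[of "{..<a}" "\<lambda>u. \<beta> ^ (q ^ u)"] by simp
  also have "\<dots> = a * (a + 3) div 2"
  proof -
    have "a * (a + 3) = a * (a + 1) + 2 * a" by (simp add: algebra_simps)
    thus ?thesis by simp
  qed
  finally show ?thesis .
qed

definition info_points :: "'e set" where
  "info_points = {0} \<union> {\<alpha> ^ i | i. i < n \<and> T i \<in> \<Gamma>}"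

lemma triangular_mono: "a * (a - 1) div 2 \<le> a * (a + 1) div 2" "a * (a + 1) div 2 \<le> a * (a + 3) div 2"
  by (intro div_le_mono mult_le_mono2; simp)+

lemma triangular_b_bounds: "b \<le> b * (b + 1) div 2" "b * (b + 1) div 2 \<le> b ^ 2"
proof -
  have "2 * b \<le> b * (b + 1)" using b_ge_2 by simp
  thus "b \<le> b * (b + 1) div 2" by linarith
  have "b * (b + 1) \<le> 2 * b ^ 2" using b_ge_2 by (simp add: power2_eq_square algebra_simps)
  thus "b * (b + 1) div 2 \<le> b ^ 2" by linarith
qed

lemma rectangles_subset_\<Gamma>:
  "{..<a * (a + 3) div 2} \<times> {..<b} \<subseteq> \<Gamma>"
  "{..<a * (a + 1) div 2} \<times> {..<b * (b + 1) div 2} \<subseteq> \<Gamma>"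
  "{..<a * (a - 1) div 2} \<times> {..<b ^ 2} \<subseteq> \<Gamma>"
  unfolding \<Gamma>_eq using triangular_mono triangular_b_bounds by auto

lemma \<Gamma>_subset: "\<Gamma> \<subseteq> {..<r1} \<times> {..<r2}"
  unfolding \<Gamma>_eq using triangular_mono triangular_b_bounds r1_bound r2_bound by auto

lemma grid_point_in_info_points: "(i1, i2) \<in> \<Gamma> \<Longrightarrow> \<beta> ^ i1 * \<gamma> ^ i2 \<in> info_points"
  using grid_point_eq_power[of i1 i2] \<Gamma>_subset unfolding info_points_def by fastforce

text \<open>A Vandermonde argument in \<open>\<beta>\<close> over the first coordinates of a grid isolates the fibre
  of \<open>t0\<close> under \<open>t \<mapsto> \<beta> ^ t\<close>; one in \<open>\<gamma>\<close> over the second coordinates then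
  separates the exponents inside the fibre, by the Chinese remainder theorem.\<close>

lemma coeff_vanishes_by_fibres:
  assumes S: "S \<subseteq> low_exps - {0}" and outside: "\<forall>t\<in>low_exps - S. f t = 0"
    and vanish: "\<forall>x\<in>info_points. low_poly f x = 0" and grid: "{..<N1} \<times> {..<N2} \<subseteq> \<Gamma>"
    and labels: "card ((\<lambda>t. \<beta> ^ t) ` S) \<le> N1"
    and t0: "t0 \<in> S" and fibre: "card {t \<in> S. \<beta> ^ t = \<beta> ^ t0} \<le> N2"
  shows "f t0 = 0"
proof -
  have fin: "finite S" using S finite_low_exps finite_subset by blast
  define F where "F = {t \<in> S. \<beta> ^ t = \<beta> ^ t0}"
  have "(\<Sum>t\<in>F. f t * (\<gamma> ^ t) ^ i2) = 0" if "i2 < N2" for i2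
  proof -
    have "\<forall>i1<N1. (\<Sum>t\<in>S. (f t * (\<gamma> ^ t) ^ i2) * (\<beta> ^ t) ^ i1) = 0"
    proof (intro allI impI)
      fix i1 assume "i1 < N1"
      hence "low_poly f (\<beta> ^ i1 * \<gamma> ^ i2) = 0"
        using vanish grid grid_point_in_info_points \<open>i2 < N2\<close> by blast
      moreover have "low_poly f (\<beta> ^ i1 * \<gamma> ^ i2) = (\<Sum>t\<in>S. f t * (\<beta> ^ i1 * \<gamma> ^ i2) ^ t)"
        unfolding low_poly_def using S outside by (intro sum.mono_neutral_right finite_low_exps) auto
      ultimately show "(\<Sum>t\<in>S. (f t * (\<gamma> ^ t) ^ i2) * (\<beta> ^ t) ^ i1) = 0"
        by (simp add: power_mult_distrib algebra_simps flip: power_mult)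
    qed
    from vandermonde_vanishing_fibre[OF fin labels this, of "\<beta> ^ t0"] t0 show ?thesis
      by (simp add: F_def)
  qed
  moreover have "inj_on (\<lambda>t. \<gamma> ^ t) F"
  proof (rule inj_onI)
    fix x y assume "x \<in> F" "y \<in> F" "\<gamma> ^ x = \<gamma> ^ y"
    moreover have "x < n" "y < n" using calculation S low_exps_less unfolding F_def by auto
    ultimately show "x = y" using chinese_remainder unfolding F_def by auto
  qed
  ultimately show ?thesis
    using vandermonde_vanishing[of F "\<lambda>t. \<gamma> ^ t" N2 f t0] fin fibre t0 by (simp add: F_def)
qed

context
  fixes f :: "nat \<Rightarrow> 'e"
  assumes vanish: "\<forall>x\<in>info_points. low_poly f x = 0"
begin

lemma const_coeff_vanishes: "f 0 = 0"
  using vanish low_poly_at_0 by (simp add: info_points_def)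

lemma lin_coeffs_vanish: "t \<in> lin_exps \<Longrightarrow> f t = 0"
proof -
  assume t: "t \<in> lin_exps"
  then obtain j where "j < m" "t = q ^ j" unfolding lin_exps_def by auto
  show ?thesis
  proof (rule coeff_vanishes_by_fibres[OF _ _ vanish rectangles_subset_\<Gamma>(1) card_labels_low])
    show "t \<in> low_exps - {0}" using t zero_notin_lin_quad by (auto simp: low_exps_def)
    show "card {s \<in> low_exps - {0}. \<beta> ^ s = \<beta> ^ t} \<le> b"
      using card_fibre_lin[OF \<open>j < m\<close>] \<open>t = q ^ j\<close> by simp
  qed (use const_coeff_vanishes in auto)
qed

lemma aligned_coeffs_vanish: "t \<in> aligned_exps \<Longrightarrow> f t = 0"
proof (rule coeff_vanishes_by_fibres[OF _ _ vanish rectangles_subset_\<Gamma>(2) card_labels_quad])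
  show "quad_exps \<subseteq> low_exps - {0}" using zero_notin_lin_quad by (auto simp: low_exps_def)
  show "\<forall>t\<in>low_exps - quad_exps. f t = 0"
    using const_coeff_vanishes lin_coeffs_vanish by (auto simp: low_exps_def)
qed (use quad_exps_split card_fibre_aligned in auto)

lemma mixed_coeffs_vanish: "t \<in> mixed_exps \<Longrightarrow> f t = 0"
proof (rule coeff_vanishes_by_fibres[OF _ _ vanish rectangles_subset_\<Gamma>(3) card_labels_mixed])
  show "mixed_exps \<subseteq> low_exps - {0}"
    using zero_notin_lin_quad quad_exps_split by (auto simp: low_exps_def)
  show "\<forall>t\<in>low_exps - mixed_exps. f t = 0"
    using const_coeff_vanishes lin_coeffs_vanish aligned_coeffs_vanish quad_exps_split
    by (auto simp: low_exps_def)
qed (auto simp: card_fibre_mixed)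

end

theorem unisolvent_info_points: "unisolvent info_points"
  unfolding unisolvent_def low_exps_def quad_exps_split
  using const_coeff_vanishes lin_coeffs_vanish aligned_coeffs_vanish mixed_coeffs_vanish by blast

lemma card_\<Gamma>: "card \<Gamma> \<le> a * (a - 1) div 2 * b ^ 2 + a * (b * (b + 1) div 2) + a * b"
proof -
  define A A' A'' B where "A = a * (a - 1) div 2" and "A' = a * (a + 1) div 2"
    and "A'' = a * (a + 3) div 2" and "B = b * (b + 1) div 2"
  have "a * (a + 1) = a * (a - 1) + a * 2" by (cases a) (simp_all add: algebra_simps)
  hence "A' = A + a" unfolding A_def A'_def by simp
  moreover have "a * (a + 3) = a * (a + 1) + a * 2" by (simp add: algebra_simps)
  hence "A'' = A' + a" unfolding A'_def A''_def by simp
  ultimately have widths: "A' = A + a" "A'' = A' + a" by simp_all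
  have "\<Gamma> = {..<A} \<times> {..<b ^ 2} \<union> {A..<A'} \<times> {..<B} \<union> {A'..<A''} \<times> {..<b}"
    unfolding \<Gamma>_eq A_def A'_def A''_def B_def by (simp add: set_eq_iff)
  also have "card \<dots> \<le> card ({..<A} \<times> {..<b ^ 2}) + card ({A..<A'} \<times> {..<B}) + card ({A'..<A''} \<times> {..<b})"
    by (meson add_right_mono card_Un_le order_trans)
  also have "\<dots> = A * b ^ 2 + a * B + a * b" by (simp add: card_cartesian_product widths)
  finally show ?thesis unfolding A_def B_def .
qed

lemma card_info_points_le: "card info_points \<le> card low_exps"
proof -
  have "card info_points \<le> Suc (card {\<alpha> ^ i | i. i < n \<and> T i \<in> \<Gamma>})"
    unfolding info_points_def by (simp add: card_insert_le_m1)
  also have "card {\<alpha> ^ i | i. i < n \<and> T i \<in> \<Gamma>} \<le> card {i. i < n \<and> T i \<in> \<Gamma>}"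
    by (rule surj_card_le) auto
  also have "card {i. i < n \<and> T i \<in> \<Gamma>} \<le> card \<Gamma>"
  proof (rule card_inj_on_le)
    show "inj_on T {i. i < n \<and> T i \<in> \<Gamma>}"
      using T_bij by (auto simp: bij_betw_def intro: inj_on_subset)
    show "finite \<Gamma>" using \<Gamma>_subset by (rule finite_subset) simp
  qed auto
  finally have "card info_points \<le> Suc (card \<Gamma>)" by simp
  define A B where "A = a * (a - 1) div 2" and "B = b * (b + 1) div 2"
  have "2 * A = a * (a - 1)" "2 * B = b * (b + 1)"
    unfolding A_def B_def using even_mult_pred[of a] by simp_all
  have "2 * card \<Gamma> \<le> 2 * (A * b ^ 2 + a * B + a * b)"
    using card_\<Gamma> unfolding A_def B_def by simp
  also have "\<dots> = (2 * A) * b ^ 2 + a * (2 * B) + 2 * a * b" by (simp only: algebra_simps)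
  also have "\<dots> = a * (a - 1) * b ^ 2 + a * (b * (b + 1)) + 2 * a * b"
    unfolding \<open>2 * A = _\<close> \<open>2 * B = _\<close> ..
  also have "\<dots> = 2 * m + m * (m + 1)"
    unfolding m_eq by (cases a) (auto simp: algebra_simps power2_eq_square)
  finally have "2 * card \<Gamma> \<le> 2 * m + m * (m + 1)" .
  moreover have "2 * card low_exps = 2 + 2 * m + m * (m + 1)"
    unfolding card_low_exps by simp
  ultimately show ?thesis using \<open>card info_points \<le> Suc (card \<Gamma>)\<close> by linarith
qed

lemma powers_outside_\<Gamma>: "{\<alpha> ^ i | i. i < n \<and> T i \<notin> \<Gamma>} = UNIV - info_points"
proof (intro equalityI subsetI)
  fix x assume "x \<in> {\<alpha> ^ i | i. i < n \<and> T i \<notin> \<Gamma>}"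
  then obtain i where i: "x = \<alpha> ^ i" "i < n" "T i \<notin> \<Gamma>" by blast
  have "\<alpha> ^ i \<noteq> \<alpha> ^ j" if "j < n" "T j \<in> \<Gamma>" for j
    using i that inj_on_powers by (auto dest: inj_onD)
  thus "x \<in> UNIV - info_points" using i primitive_nonzero unfolding info_points_def by auto
next
  fix x assume x: "x \<in> UNIV - info_points"
  then obtain i where "i < n" "x = \<alpha> ^ i" using nonzero_eq_power unfolding info_points_def by auto
  thus "x \<in> {\<alpha> ^ i | i. i < n \<and> T i \<notin> \<Gamma>}" using x unfolding info_points_def by blast
qed

end

theorem mainTheorem7:
  fixes q m n r1 r2 a b :: nat
    and \<alpha> :: "'e::{finite,field}"
    and T :: "nat \<Rightarrow> nat \<times> nat"
    and \<Gamma> :: "(nat \<times> nat) set"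
  assumes "prime_power q" and "q > 2" and "m \<ge> 1"
    and "card (UNIV :: 'e set) = q ^ m"
    and "n = q ^ m - 1" and "n = r1 * r2" and "r1 > 1" and "r2 > 1"
    and "coprime r1 r2" and "r1 = q ^ a - 1" and "m = a * b"
    and "(\<lambda>i. \<alpha> ^ i) ` {..<n} = UNIV - {0}"
    and "bij_betw T {..<n} ({..<r1} \<times> {..<r2})"
    and "\<forall>i<n. \<forall>j<n. T ((i + j) mod n) =
           ((fst (T i) + fst (T j)) mod r1, (snd (T i) + snd (T j)) mod r2)"
    and "\<Gamma> = {(i1, i2). i1 < a * (a - 1) div 2 \<and> i2 < b ^ 2}
          \<union> {(i1, i2). a * (a - 1) div 2 \<le> i1 \<and> i1 < a * (a + 1) div 2 \<and> i2 < b * (b + 1) div 2}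
          \<union> {(i1, i2). a * (a + 1) div 2 \<le> i1 \<and> i1 < a * (a + 3) div 2 \<and> i2 < b}"
  shows "info_set (subfield_q q) (GRM q 2 m :: ('e \<Rightarrow> 'e) set)
           ({0} \<union> {\<alpha> ^ i | i. i < n \<and> T i \<in> \<Gamma>}) \<and>
         info_set (subfield_q q) (GRM q (m * (q - 1) - 3) m :: ('e \<Rightarrow> 'e) set)
           {\<alpha> ^ i | i. i < n \<and> T i \<notin> \<Gamma>}"
proof -
  have "1 < n" using assms(6-8) by (metis less_1_mult)
  hence "\<alpha> \<noteq> 0" using assms(12) by (metis DiffE image_eqI insertCI lessThan_iff power_one_right)
  moreover have "card (UNIV :: 'e set) = Suc n" using assms(2,4,5) by simp
  moreover have "a \<ge> 1" "b \<ge> 2" using exponent_factor_bounds[of q a b r2] assms(5-8,10,11) by simp_all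
  hence "m \<ge> 2" using assms(11) mult_le_mono[of 1 a 2 b] by simp
  ultimately interpret crt_setting \<alpha> n q m r1 r2 a b T \<Gamma>
    using assms by unfold_locales auto
  show ?thesis
    using info_set_GRM_2[OF unisolvent_info_points card_info_points_le]
      info_set_GRM_dual[OF unisolvent_info_points card_info_points_le]
    by (simp add: powers_outside_\<Gamma> info_points_def)
qed

end
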